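(* In the discrete setting described in the context (with fixed integers $\ell,k\ge1$), assume that $(\sigma_{\mathcal{K}},u_{\mathcal{K}},u_{\partial\mathcal{K}})\in\Sigma^{\ell,k}(\mathcal{K})\times\mathcal{P}^{\ell-1}(\mathcal{K})\times\Lambda_{\partial\mathcal{K}}$ solves the discrete hybridized mixed problem (dHM). Let $\tilde u_{\mathcal{K}}$ be the unique element of $V^{\ell,k}_0$ such that, for all $K\in\mathcal{K}$, $\pi^{\ell-1}_K(\tilde u_K)=u_K$ and $\pi^{k-1}_{\mathcal{F}_K}(\tilde u_K|_{\partial K})=u_{\partial K}$. Then $\tilde u_{\mathcal{K}}$ solves the discrete primal problem (dP).
   Context: Let $\Omega\subset\mathbb{R}^d$, $d\in\{2,3\}$, be a bounded connected Lipschitz polytope, $f\in L^2(\Omega)$, and $\mathbb{b}:\Omega\to\mathbb{R}^{d\times d}_{\rm sym}$ measurable with $b_\flat|\xi|^2\le\mathbb{b}(x)\xi\cdot\xi\le b_\sharp|\xi|^2$ a.e., for constants $b_\sharp\ge b_\flat>0$. $(\cdot,\cdot)_X$ is the $L^2(X)$ inner product. Mesh: $\mathcal{K}$ is a finite set of disjoint Lipschitz open $d$-polytopes (cells) with $\bigcup\bar K=\bar\Omega$; $\mathcal{F}$ is a finite set of disjoint connected subsets (faces) of $\partial\mathcal{K}:=\bigcup_K\partial K$ with $\bigcup_F\bar F=\partial\mathcal{K}$, each face $F$ being a Lipschitz relatively open $(d-1)$-polytopal subset of an affine hyperplane, and either an interface ($\bar F\subseteq\partial K^+\cap\partial K^-$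 for two distinct cells) or a boundary face ($\bar F\subseteq\partial K\cap\partial\Omega$ for one cell). $\mathcal{F}_K$ is the set of faces with $\bigcup_{F\in\mathcal{F}_K}\bar F=\partial K$; $n_{\partial K}$ is the outward unit normal, $n_{K,F}=n_{\partial K}|_F$; $n_F:=n_{K^+,F}$ for interfaces and $n_{K,F}$ for boundary faces; $\varepsilon_{K,F}:=n_{K,F}\cdot n_F$. $\mathcal{P}^n(X)$ denotes restrictions to $X$ of $d$-variate polynomials of total degree $\le n$ ($\mathcal{P}^{-1}:=\{0\}$), $\pi^n_X$ the $L^2(X)$-orthogonal projector onto it; $\mathcal{P}^n(\mathcal{F}_K)$, $\mathcal{P}^n(\mathcal{K})$ are the broken (face-wise on $\partial K$, cell-wise on $\Omega$) polynomial spaces with $L^2$-orthogonal projectors $\pi^n_{\mathcal{F}_K}$, $\pi^n_{\mathcal{K}}$. $H^1(\mathcal{K})$, $H(\mathrm{div};\mathcal{K})$ and broken operators $\nabla_{\mathcal{K}},\nabla_{\mathcal{K}}\cdot$ are defined cell-wise. For $v_{\mathcal{K}}\in H^1(\mathcal{K})$, the jump is $[\![v_{\mathcal{K}}]\!]_F:=\sum_{K\in\{K^+,K^-\}}\varepsilon_{K,F}v_K|_F$ on interfaces and $v_K|_F$ on boundary faces; $\tilde H^1_0:=\{v_{\mathcal{K}}\in H^1(\mathcal{K}):\pi^{k-1}_F([\![v_{\mathcal{K}}]\!]_F)=0\ \forall F\in\mathcal{F}\}$. For $K\in\mathcal{K}$: $\Sigma^{\ell,k}(K):=\{\tau\in H(\mathrm{div};K):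 \nabla\times(\mathbb{b}^{-1}\tau)=0,\ \nabla\cdot\tau\in\mathcal{P}^{\ell-1}(K),\ \tau|_{\partial K}\cdot n_{\partial K}\in\mathcal{P}^{k-1}(\mathcal{F}_K)\}$ (for $d=2$ the curl condition reads $\nabla\cdot((\mathbb{b}^{-1}\tau)^\perp)=0$, $z^\perp$ the rotation by $-\pi/2$), and $V^{\ell,k}(K):=\{v\in H^1(K):\nabla\cdot(\mathbb{b}\nabla v)\in\mathcal{P}^{\ell-1}(K),\ (\mathbb{b}\nabla v)|_{\partial K}\cdot n_{\partial K}\in\mathcal{P}^{k-1}(\mathcal{F}_K)\}$. $\Sigma^{\ell,k}(\mathcal{K})$, $V^{\ell,k}(\mathcal{K})$ are the broken spaces with these local spaces; $\Sigma^{\ell,k}_0:=\Sigma^{\ell,k}(\mathcal{K})\cap H(\mathrm{div};\Omega)$ and $V^{\ell,k}_0:=V^{\ell,k}(\mathcal{K})\cap\tilde H^1_0$. Trace space: $\Lambda_{\partial\mathcal{K}}:=\{(v_{\partial K})_K\in\prod_K\mathcal{P}^{k-1}(\mathcal{F}_K):\exists\tilde v_{\mathcal{K}}\in V^{\ell,k}_0,\ v_{\partial K}=\pi^{k-1}_{\mathcal{F}_K}(\tilde v_K|_{\partial K})\ \forall K\}$. Pairing: $\langle\tau_{\partial\mathcal{K}},v_{\partial\mathcal{K}}\rangle_{\partial\mathcal{K}}:=\sum_K(\tau_{\partial K},v_{\partial K})_{\partial K}$, with $\tau_{\mathcal{K}}|_{\partial\mathcal{K}}\cdot n_{\partial\mathcal{K}}:=(\tau_K|_{\partial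 K}\cdot n_{\partial K})_K$. (dHM): find $(\sigma_{\mathcal{K}},u_{\mathcal{K}},u_{\partial\mathcal{K}})\in\Sigma^{\ell,k}(\mathcal{K})\times\mathcal{P}^{\ell-1}(\mathcal{K})\times\Lambda_{\partial\mathcal{K}}$ with $(\mathbb{b}^{-1}\sigma_{\mathcal{K}},\tau_{\mathcal{K}})_\Omega+(u_{\mathcal{K}},\nabla_{\mathcal{K}}\cdot\tau_{\mathcal{K}})_\Omega-\langle\tau_{\mathcal{K}}|_{\partial\mathcal{K}}\cdot n_{\partial\mathcal{K}},u_{\partial\mathcal{K}}\rangle_{\partial\mathcal{K}}=0$ for all $\tau_{\mathcal{K}}\in\Sigma^{\ell,k}(\mathcal{K})$; $-(\nabla_{\mathcal{K}}\cdot\sigma_{\mathcal{K}},v_{\mathcal{K}})_\Omega=(f,v_{\mathcal{K}})_\Omega$ for all $v_{\mathcal{K}}\in\mathcal{P}^{\ell-1}(\mathcal{K})$; and $\langle\sigma_{\mathcal{K}}|_{\partial\mathcal{K}}\cdot n_{\partial\mathcal{K}},v_{\partial\mathcal{K}}\rangle_{\partial\mathcal{K}}=0$ for all $v_{\partial\mathcal{K}}\in\Lambda_{\partial\mathcal{K}}$. (dP): find $\tilde u_{\mathcal{K}}\in V^{\ell,k}_0$ with $(\mathbb{b}\nabla_{\mathcal{K}}\tilde u_{\mathcal{K}},\nabla_{\mathcal{K}}\tilde v_{\mathcal{K}})_\Omega=(f,\pi^{\ell-1}_{\mathcal{K}}(\tilde v_{\mathcal{K}}))_\Omega$ for all $\tilde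 v_{\mathcal{K}}\in V^{\ell,k}_0$. *)

theory Defs
  imports "HOL-Analysis.Analysis"
begin

text \<open>Points of the ambient space are vectors of type real^'n; the dimension is CARD('n).
Broken (cell-wise) functions are families indexed by the cells K of the mesh.\<close>

definition partial :: "(real^'n \<Rightarrow> real) \<Rightarrow> 'n \<Rightarrow> real^'n \<Rightarrow> real" where
  "partial \<phi> i x = frechet_derivative \<phi> (at x) (axis i 1)"

definition grad_c :: "(real^'n \<Rightarrow> real) \<Rightarrow> real^'n \<Rightarrow> real^'n" where
  "grad_c \<phi> x = (\<chi> i. partial \<phi> i x)"

coinductive smooth :: "(real^'n \<Rightarrow> real) \<Rightarrow> bool" where
  "(\<forall>x. \<phi> differentiable (at x)) \<Longrightarrow> (\<forall>i. smooth (partial \<phi> i)) \<Longrightarrow> smooth \<phi>"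

definition test_fun :: "(real^'n) set \<Rightarrow> (real^'n \<Rightarrow> real) \<Rightarrow> bool" where
  "test_fun K \<phi> \<longleftrightarrow> smooth \<phi> \<and> compact (closure {x. \<phi> x \<noteq> 0}) \<and> closure {x. \<phi> x \<noteq> 0} \<subseteq> K"

text \<open>With H = UNIV this is the usual notion of a (bounded) Lipschitz domain.\<close>
definition lipschitz_in :: "(real^'n) set \<Rightarrow> (real^'n) set \<Rightarrow> bool" where
  "lipschitz_in H S \<longleftrightarrow> S \<subseteq> H \<and> openin (top_of_set H) S \<and> bounded S \<and>
     (\<forall>x \<in> closure S - S. \<exists>e r g L. norm e = 1 \<and> (\<forall>y\<in>H. y + e \<in> H) \<and> r > 0 \<and>
        L-lipschitz_on UNIV g \<and> (\<forall>y t. g (y + t *\<^sub>R e) = g y) \<and>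
        S \<inter> ball x r = {y \<in> H \<inter> ball x r. y \<bullet> e < g y})"

definition polytopal :: "(real^'n) set \<Rightarrow> bool" where
  "polytopal S \<longleftrightarrow> (\<exists>P. finite P \<and> (\<forall>Q\<in>P. polytope Q) \<and> closure S = \<Union>P)"

definition lipschitz_polytope :: "(real^'n) set \<Rightarrow> bool" where
  "lipschitz_polytope K \<longleftrightarrow> open K \<and> K \<noteq> {} \<and> lipschitz_in UNIV K \<and> polytopal K"

definition lipschitz_face :: "(real^'n) set \<Rightarrow> bool" where
  "lipschitz_face F \<longleftrightarrow> (\<exists>n c. n \<noteq> 0 \<and> F \<noteq> {} \<and> lipschitz_in {x. n \<bullet> x = c} F \<and> polytopal F)"

definition face_normal :: "(real^'n) set \<Rightarrow> real^'n" where
  "face_normal F = (SOME n. norm n = 1 \<and> (\<exists>c. F \<subseteq> {x. n \<bullet> x = c}))"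

definition face_offset :: "(real^'n) set \<Rightarrow> real" where
  "face_offset F = (SOME c. F \<subseteq> {x. face_normal F \<bullet> x = c})"

text \<open>(d-1)-dimensional Lebesgue (surface) measure on a flat face F: the Lebesgue measure of the
slab {y + t n : y in F, |t| < 1}, pushed forward by the orthogonal projection onto the hyperplane
of F and divided by the slab width 2 (Fubini), then completed.\<close>
definition face_measure :: "(real^'n) set \<Rightarrow> (real^'n) measure" where
  "face_measure F = (let n = face_normal F; c = face_offset F;
      P = (\<lambda>x. x - (x \<bullet> n - c) *\<^sub>R n);
      S = {x. \<bar>x \<bullet> n - c\<bar> < 1 \<and> P x \<in> F}
    in completion (scale_measure (ennreal (1/2)) (distr (lebesgue_on S) lborel P)))"

definition outer_normal :: "(real^'n) set \<Rightarrow> (real^'n) set \<Rightarrow> real^'n" where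
  "outer_normal K F = (THE n. norm n = 1 \<and> (\<exists>c. F \<subseteq> {x. n \<bullet> x = c}) \<and>
      (\<forall>x\<in>F. \<exists>e>0. \<forall>t. 0 < t \<and> t < e \<longrightarrow> x - t *\<^sub>R n \<in> K \<and> x + t *\<^sub>R n \<notin> K))"

definition facesK :: "(real^'n) set set \<Rightarrow> (real^'n) set \<Rightarrow> (real^'n) set set" where
  "facesK \<F> K = {F \<in> \<F>. F \<subseteq> frontier K}"

definition is_interface :: "(real^'n) set set \<Rightarrow> (real^'n) set \<Rightarrow> bool" where
  "is_interface \<K> F \<longleftrightarrow> (\<exists>K1\<in>\<K>. \<exists>K2\<in>\<K>. K1 \<noteq> K2 \<and> closure F \<subseteq> frontier K1 \<inter> frontier K2)"

definition is_boundary_face :: "(real^'n) set \<Rightarrow> (real^'n) set set \<Rightarrow> (real^'n) set \<Rightarrow> bool" where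
  "is_boundary_face \<Omega> \<K> F \<longleftrightarrow> (\<exists>K\<in>\<K>. closure F \<subseteq> frontier K \<inter> frontier \<Omega>)"

definition admissible_mesh ::
  "(real^'n) set \<Rightarrow> (real^'n) set set \<Rightarrow> (real^'n) set set \<Rightarrow> ((real^'n) set \<Rightarrow> real^'n) \<Rightarrow> bool" where
  "admissible_mesh \<Omega> \<K> \<F> nF \<longleftrightarrow>
     (CARD('n) = 2 \<or> CARD('n) = 3) \<and>
     lipschitz_polytope \<Omega> \<and> connected \<Omega> \<and>
     finite \<K> \<and> (\<forall>K\<in>\<K>. lipschitz_polytope K) \<and>
     (\<forall>K1\<in>\<K>. \<forall>K2\<in>\<K>. K1 \<noteq> K2 \<longrightarrow> K1 \<inter> K2 = {}) \<and>
     \<Union>(closure ` \<K>) = closure \<Omega> \<and>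
     finite \<F> \<and> (\<forall>F\<in>\<F>. lipschitz_face F \<and> connected F) \<and>
     (\<forall>F1\<in>\<F>. \<forall>F2\<in>\<F>. F1 \<noteq> F2 \<longrightarrow> F1 \<inter> F2 = {}) \<and>
     \<Union>(closure ` \<F>) = \<Union>(frontier ` \<K>) \<and>
     (\<forall>F\<in>\<F>. is_interface \<K> F \<or> is_boundary_face \<Omega> \<K> F) \<and>
     (\<forall>K\<in>\<K>. \<Union>(closure ` facesK \<F> K) = frontier K) \<and>
     (\<forall>F\<in>\<F>. \<exists>K\<in>\<K>. F \<in> facesK \<F> K \<and> nF F = outer_normal K F)"

definition L2 :: "'a measure \<Rightarrow> ('a \<Rightarrow> real) \<Rightarrow> bool" where
  "L2 M v \<longleftrightarrow> v \<in> borel_measurable M \<and> integrable M (\<lambda>x. (v x)\<^sup>2)"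

definition L2v :: "'a measure \<Rightarrow> ('a \<Rightarrow> real^'n) \<Rightarrow> bool" where
  "L2v M \<tau> \<longleftrightarrow> (\<forall>i. L2 M (\<lambda>x. \<tau> x $ i))"

text \<open>Weak gradient g of v on K (so v in H^1(K) iff such g exists).\<close>
definition weak_grad :: "(real^'n) set \<Rightarrow> (real^'n \<Rightarrow> real) \<Rightarrow> (real^'n \<Rightarrow> real^'n) \<Rightarrow> bool" where
  "weak_grad K v g \<longleftrightarrow> L2 (lebesgue_on K) v \<and> L2v (lebesgue_on K) g \<and>
     (\<forall>\<phi> i. test_fun K \<phi> \<longrightarrow>
        integral\<^sup>L (lebesgue_on K) (\<lambda>x. v x * partial \<phi> i x) = - integral\<^sup>L (lebesgue_on K) (\<lambda>x. g x $ i * \<phi> x))"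

text \<open>Weak divergence q of tau on K (so tau in H(div;K) iff such q exists).\<close>
definition weak_div :: "(real^'n) set \<Rightarrow> (real^'n \<Rightarrow> real^'n) \<Rightarrow> (real^'n \<Rightarrow> real) \<Rightarrow> bool" where
  "weak_div K \<tau> q \<longleftrightarrow> L2v (lebesgue_on K) \<tau> \<and> L2 (lebesgue_on K) q \<and>
     (\<forall>\<phi>. test_fun K \<phi> \<longrightarrow>
        integral\<^sup>L (lebesgue_on K) (\<lambda>x. \<tau> x \<bullet> grad_c \<phi> x) = - integral\<^sup>L (lebesgue_on K) (\<lambda>x. q x * \<phi> x))"

text \<open>Distributional curl-freeness: all components of curl w (partial_i w_j - partial_j w_i) vanish
weakly; for d = 2 this is div(w^perp) = 0, for d = 3 it is curl w = 0.\<close>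
definition curl_free :: "(real^'n) set \<Rightarrow> (real^'n \<Rightarrow> real^'n) \<Rightarrow> bool" where
  "curl_free K w \<longleftrightarrow> (\<forall>\<phi> i j. test_fun K \<phi> \<longrightarrow>
     integral\<^sup>L (lebesgue_on K) (\<lambda>x. w x $ i * partial \<phi> j x - w x $ j * partial \<phi> i x) = 0)"

definition is_trace :: "(real^'n) set set \<Rightarrow> (real^'n) set \<Rightarrow> (real^'n \<Rightarrow> real) \<Rightarrow> (real^'n \<Rightarrow> real) \<Rightarrow> bool" where
  "is_trace \<F> K v t \<longleftrightarrow> (\<exists>g. weak_grad K v g \<and>
     (\<forall>F\<in>facesK \<F> K. L2 (face_measure F) t) \<and>
     (\<exists>vm. (\<forall>m. smooth (vm m)) \<and>
        (\<lambda>m. integral\<^sup>L (lebesgue_on K) (\<lambda>x. (vm m x - v x)\<^sup>2)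
            + integral\<^sup>L (lebesgue_on K) (\<lambda>x. (norm (grad_c (vm m) x - g x))\<^sup>2)) \<longlonglongrightarrow> 0 \<and>
        (\<lambda>m. \<Sum>F\<in>facesK \<F> K. integral\<^sup>L (face_measure F) (\<lambda>x. (vm m x - t x)\<^sup>2)) \<longlonglongrightarrow> 0))"

text \<open>g (square integrable on the faces of K) is the normal trace of tau in H(div;K), defined by
duality with traces of H^1(K) functions (Green's formula).\<close>
definition normal_trace :: "(real^'n) set set \<Rightarrow> (real^'n) set \<Rightarrow> (real^'n \<Rightarrow> real^'n) \<Rightarrow> (real^'n \<Rightarrow> real) \<Rightarrow> bool" where
  "normal_trace \<F> K \<tau> g \<longleftrightarrow> (\<exists>q. weak_div K \<tau> q) \<and> (\<forall>F\<in>facesK \<F> K. L2 (face_measure F) g) \<and>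
     (\<forall>q \<phi> g\<phi> t. weak_div K \<tau> q \<longrightarrow> weak_grad K \<phi> g\<phi> \<longrightarrow> is_trace \<F> K \<phi> t \<longrightarrow>
        integral\<^sup>L (lebesgue_on K) (\<lambda>x. \<tau> x \<bullet> g\<phi> x) + integral\<^sup>L (lebesgue_on K) (\<lambda>x. q x * \<phi> x)
        = (\<Sum>F\<in>facesK \<F> K. integral\<^sup>L (face_measure F) (\<lambda>x. g x * t x)))"

definition poly_fun :: "nat \<Rightarrow> (real^'n \<Rightarrow> real) \<Rightarrow> bool" where
  "poly_fun n p \<longleftrightarrow> (\<exists>c. \<forall>x. p x =
     (\<Sum>\<alpha>\<in>{\<alpha>::'n \<Rightarrow> nat. sum \<alpha> UNIV \<le> n}. c \<alpha> * (\<Prod>i\<in>UNIV. (x $ i) ^ \<alpha> i)))"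

definition poly_on :: "(real^'n) measure \<Rightarrow> nat \<Rightarrow> (real^'n \<Rightarrow> real) \<Rightarrow> bool" where
  "poly_on M n v \<longleftrightarrow> (\<exists>p. poly_fun n p \<and> (AE x in M. v x = p x))"

definition l2proj :: "(real^'n) measure \<Rightarrow> nat \<Rightarrow> (real^'n \<Rightarrow> real) \<Rightarrow> (real^'n \<Rightarrow> real) \<Rightarrow> bool" where
  "l2proj M n v w \<longleftrightarrow> poly_on M n w \<and>
     (\<forall>p. poly_fun n p \<longrightarrow> integral\<^sup>L M (\<lambda>x. (v x - w x) * p x) = 0)"

definition Sigma_loc :: "(real^'n) set set \<Rightarrow> (real^'n \<Rightarrow> real^'n^'n) \<Rightarrow> nat \<Rightarrow> nat \<Rightarrow> (real^'n) set \<Rightarrow> (real^'n \<Rightarrow> real^'n) \<Rightarrow> bool" where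
  "Sigma_loc \<F> b l k K \<tau> \<longleftrightarrow> (\<exists>q. weak_div K \<tau> q) \<and>
     curl_free K (\<lambda>x. matrix_inv (b x) *v \<tau> x) \<and>
     (\<exists>q. weak_div K \<tau> q \<and> poly_on (lebesgue_on K) (l - 1) q) \<and>
     (\<exists>g. normal_trace \<F> K \<tau> g \<and> (\<forall>F\<in>facesK \<F> K. poly_on (face_measure F) (k - 1) g))"

definition V_loc :: "(real^'n) set set \<Rightarrow> (real^'n \<Rightarrow> real^'n^'n) \<Rightarrow> nat \<Rightarrow> nat \<Rightarrow> (real^'n) set \<Rightarrow> (real^'n \<Rightarrow> real) \<Rightarrow> bool" where
  "V_loc \<F> b l k K v \<longleftrightarrow> (\<exists>gv. weak_grad K v gv \<and>
     (\<exists>q. weak_div K (\<lambda>x. b x *v gv x) q \<and> poly_on (lebesgue_on K) (l - 1) q) \<and>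
     (\<exists>g. normal_trace \<F> K (\<lambda>x. b x *v gv x) g \<and> (\<forall>F\<in>facesK \<F> K. poly_on (face_measure F) (k - 1) g)))"

text \<open>Jump condition defining tilde H^1_0: pi^{k-1}_F of the jump vanishes on every face.\<close>
definition jumps_vanish :: "(real^'n) set set \<Rightarrow> (real^'n) set set \<Rightarrow> ((real^'n) set \<Rightarrow> real^'n) \<Rightarrow> nat \<Rightarrow>
    ((real^'n) set \<Rightarrow> real^'n \<Rightarrow> real) \<Rightarrow> bool" where
  "jumps_vanish \<K> \<F> nF k v \<longleftrightarrow> (\<exists>t. (\<forall>K\<in>\<K>. is_trace \<F> K (v K) (t K)) \<and>
     (\<forall>F\<in>\<F>. \<forall>p. poly_fun (k - 1) p \<longrightarrow>
        integral\<^sup>L (face_measure F)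
          (\<lambda>x. (\<Sum>K\<in>{K\<in>\<K>. F \<in> facesK \<F> K}. (outer_normal K F \<bullet> nF F) * t K x) * p x) = 0))"

definition V0 :: "(real^'n) set set \<Rightarrow> (real^'n) set set \<Rightarrow> ((real^'n) set \<Rightarrow> real^'n) \<Rightarrow> (real^'n \<Rightarrow> real^'n^'n) \<Rightarrow>
    nat \<Rightarrow> nat \<Rightarrow> ((real^'n) set \<Rightarrow> real^'n \<Rightarrow> real) \<Rightarrow> bool" where
  "V0 \<K> \<F> nF b l k v \<longleftrightarrow> (\<forall>K\<in>\<K>. V_loc \<F> b l k K (v K)) \<and> jumps_vanish \<K> \<F> nF k v"

definition Lambda :: "(real^'n) set set \<Rightarrow> (real^'n) set set \<Rightarrow> ((real^'n) set \<Rightarrow> real^'n) \<Rightarrow> (real^'n \<Rightarrow> real^'n^'n) \<Rightarrow>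
    nat \<Rightarrow> nat \<Rightarrow> ((real^'n) set \<Rightarrow> real^'n \<Rightarrow> real) \<Rightarrow> bool" where
  "Lambda \<K> \<F> nF b l k vB \<longleftrightarrow> (\<forall>K\<in>\<K>. \<forall>F\<in>facesK \<F> K. poly_on (face_measure F) (k - 1) (vB K)) \<and>
     (\<exists>v t. V0 \<K> \<F> nF b l k v \<and> (\<forall>K\<in>\<K>. is_trace \<F> K (v K) (t K) \<and>
        (\<forall>F\<in>facesK \<F> K. l2proj (face_measure F) (k - 1) (t K) (vB K))))"

definition bpair :: "(real^'n) set set \<Rightarrow> (real^'n) set set \<Rightarrow> ((real^'n) set \<Rightarrow> real^'n \<Rightarrow> real) \<Rightarrow>
    ((real^'n) set \<Rightarrow> real^'n \<Rightarrow> real) \<Rightarrow> real" where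
  "bpair \<K> \<F> g w = (\<Sum>K\<in>\<K>. \<Sum>F\<in>facesK \<F> K. integral\<^sup>L (face_measure F) (\<lambda>x. g K x * w K x))"

definition dHM :: "(real^'n) set set \<Rightarrow> (real^'n) set set \<Rightarrow> ((real^'n) set \<Rightarrow> real^'n) \<Rightarrow> (real^'n \<Rightarrow> real^'n^'n) \<Rightarrow>
    (real^'n \<Rightarrow> real) \<Rightarrow> nat \<Rightarrow> nat \<Rightarrow> ((real^'n) set \<Rightarrow> real^'n \<Rightarrow> real^'n) \<Rightarrow>
    ((real^'n) set \<Rightarrow> real^'n \<Rightarrow> real) \<Rightarrow> ((real^'n) set \<Rightarrow> real^'n \<Rightarrow> real) \<Rightarrow> bool" where
  "dHM \<K> \<F> nF b f l k \<sigma> u uB \<longleftrightarrow>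
     (\<forall>K\<in>\<K>. Sigma_loc \<F> b l k K (\<sigma> K)) \<and>
     (\<forall>K\<in>\<K>. poly_on (lebesgue_on K) (l - 1) (u K)) \<and>
     Lambda \<K> \<F> nF b l k uB \<and>
     (\<forall>\<tau> q\<tau> g\<tau>. (\<forall>K\<in>\<K>. Sigma_loc \<F> b l k K (\<tau> K) \<and> weak_div K (\<tau> K) (q\<tau> K) \<and> normal_trace \<F> K (\<tau> K) (g\<tau> K)) \<longrightarrow>
        (\<Sum>K\<in>\<K>. integral\<^sup>L (lebesgue_on K) (\<lambda>x. (matrix_inv (b x) *v \<sigma> K x) \<bullet> \<tau> K x))
        + (\<Sum>K\<in>\<K>. integral\<^sup>L (lebesgue_on K) (\<lambda>x. u K x * q\<tau> K x))
        - bpair \<K> \<F> g\<tau> uB = 0) \<and>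
     (\<forall>v q\<sigma>. (\<forall>K\<in>\<K>. poly_on (lebesgue_on K) (l - 1) (v K) \<and> weak_div K (\<sigma> K) (q\<sigma> K)) \<longrightarrow>
        - (\<Sum>K\<in>\<K>. integral\<^sup>L (lebesgue_on K) (\<lambda>x. q\<sigma> K x * v K x))
        = (\<Sum>K\<in>\<K>. integral\<^sup>L (lebesgue_on K) (\<lambda>x. f x * v K x))) \<and>
     (\<forall>vB g\<sigma>. Lambda \<K> \<F> nF b l k vB \<and> (\<forall>K\<in>\<K>. normal_trace \<F> K (\<sigma> K) (g\<sigma> K)) \<longrightarrow>
        bpair \<K> \<F> g\<sigma> vB = 0)"

definition dP :: "(real^'n) set set \<Rightarrow> (real^'n) set set \<Rightarrow> ((real^'n) set \<Rightarrow> real^'n) \<Rightarrow> (real^'n \<Rightarrow> real^'n^'n) \<Rightarrow>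
    (real^'n \<Rightarrow> real) \<Rightarrow> nat \<Rightarrow> nat \<Rightarrow> ((real^'n) set \<Rightarrow> real^'n \<Rightarrow> real) \<Rightarrow> bool" where
  "dP \<K> \<F> nF b f l k u \<longleftrightarrow> V0 \<K> \<F> nF b l k u \<and>
     (\<forall>v gu gv w. V0 \<K> \<F> nF b l k v \<longrightarrow>
        (\<forall>K\<in>\<K>. weak_grad K (u K) (gu K) \<and> weak_grad K (v K) (gv K) \<and> l2proj (lebesgue_on K) (l - 1) (v K) (w K)) \<longrightarrow>
        (\<Sum>K\<in>\<K>. integral\<^sup>L (lebesgue_on K) (\<lambda>x. (b x *v gu K x) \<bullet> gv K x))
        = (\<Sum>K\<in>\<K>. integral\<^sup>L (lebesgue_on K) (\<lambda>x. f x * w K x)))"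

definition admissible_data :: "(real^'n) set \<Rightarrow> (real^'n \<Rightarrow> real^'n^'n) \<Rightarrow> real \<Rightarrow> real \<Rightarrow> (real^'n \<Rightarrow> real) \<Rightarrow> bool" where
  "admissible_data \<Omega> b bflat bsharp f \<longleftrightarrow>
     L2 (lebesgue_on \<Omega>) f \<and>
     (\<forall>i j. (\<lambda>x. b x $ i $ j) \<in> borel_measurable (lebesgue_on \<Omega>)) \<and>
     (\<forall>x\<in>\<Omega>. transpose (b x) = b x) \<and>
     0 < bflat \<and> bflat \<le> bsharp \<and>
     (AE x in lebesgue_on \<Omega>. \<forall>\<xi>. bflat * (norm \<xi>)\<^sup>2 \<le> (b x *v \<xi>) \<bullet> \<xi> \<and> (b x *v \<xi>) \<bullet> \<xi> \<le> bsharp * (norm \<xi>)\<^sup>2)"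

end

theory Submission
  imports Defs "HOL-Computational_Algebra.Polynomial"
begin

text \<open>Let v be a discrete primal function.  On each cell the flux b \<nabla>v is curl-free (its
  image under b\<inverse> is a gradient) and has polynomial divergence and normal traces, so it is an
  admissible test function in the first equation of the hybridized mixed problem.  In Green's
  formula for this flux tested with ut only the projections of ut onto the cell and the faces
  occur, and these are u and uB; so that equation becomes (\<sigma>, \<nabla>v) = (b \<nabla>ut, \<nabla>v).  Likewise
  Green's formula for \<sigma> tested with v only sees the projections of v, which lie in the spaces of
  the second and third equations, and gives (\<sigma>, \<nabla>v) = (f, \<pi> v).  Because gradients and traces
  are only given existentially, two analytic facts enter: symmetry of second derivatives
  (gradients are curl-free) and uniqueness of weak gradients (the fundamental lemma of the calculus
  of variations).\<close>

lemma L2_mult_integrable: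
  assumes "L2 M f" "L2 M g"
  shows "integrable M (\<lambda>x. f x * g x)"
proof (rule Bochner_Integration.integrable_bound)
  show "integrable M (\<lambda>x. (f x)\<^sup>2 + (g x)\<^sup>2)"
    using assms by (simp add: L2_def)
  show "(\<lambda>x. f x * g x) \<in> borel_measurable M"
    using assms by (auto simp: L2_def)
  have "\<bar>f x * g x\<bar> \<le> (f x)\<^sup>2 + (g x)\<^sup>2" for x
  proof -
    have "2 * (\<bar>f x\<bar> * \<bar>g x\<bar>) \<le> (f x)\<^sup>2 + (g x)\<^sup>2"
      using sum_squares_bound[of "\<bar>f x\<bar>" "\<bar>g x\<bar>"] by (simp add: power2_eq_square mult.assoc)
    moreover have "0 \<le> \<bar>f x\<bar> * \<bar>g x\<bar>"
      by simp
    ultimately show ?thesis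
      unfolding abs_mult by linarith
  qed
  then show "AE x in M. norm (f x * g x) \<le> norm ((f x)\<^sup>2 + (g x)\<^sup>2)"
    by simp
qed

lemma L2_add:
  assumes "L2 M f" "L2 M g"
  shows "L2 M (\<lambda>x. f x + g x)"
proof -
  have "integrable M (\<lambda>x. (f x)\<^sup>2 + (g x)\<^sup>2 + 2 * (f x * g x))"
    using assms L2_mult_integrable[OF assms] by (auto simp: L2_def)
  then show ?thesis
    using assms by (auto simp: L2_def power2_sum algebra_simps)
qed

lemma L2_cmult: "L2 M f \<Longrightarrow> L2 M (\<lambda>x. c * f x)"
  by (auto simp: L2_def power_mult_distrib)

lemma L2_diff:
  assumes "L2 M f" "L2 M g"
  shows "L2 M (\<lambda>x. f x - g x)"
  using L2_add[OF assms(1) L2_cmult[OF assms(2), of "-1"]] by simp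

lemma L2_sum: "(\<And>a. a \<in> A \<Longrightarrow> L2 M (f a)) \<Longrightarrow> L2 M (\<lambda>x. \<Sum>a\<in>A. f a x)"
  by (induction A rule: infinite_finite_induct) (auto simp: L2_add, simp_all add: L2_def)

definition L2_inner :: "'a measure \<Rightarrow> ('a \<Rightarrow> real) \<Rightarrow> ('a \<Rightarrow> real) \<Rightarrow> real" where
  "L2_inner M f g = integral\<^sup>L M (\<lambda>x. f x * g x)"

lemma L2_inner_commute: "L2_inner M f g = L2_inner M g f"
  by (simp add: L2_inner_def mult.commute)

lemma L2_inner_diff_left:
  "L2 M f \<Longrightarrow> L2 M g \<Longrightarrow> L2 M h \<Longrightarrow> L2_inner M (\<lambda>x. f x - g x) h = L2_inner M f h - L2_inner M g h"
  by (simp add: L2_inner_def left_diff_distrib L2_mult_integrable)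

lemma L2_inner_add_left:
  "L2 M f \<Longrightarrow> L2 M g \<Longrightarrow> L2 M h \<Longrightarrow> L2_inner M (\<lambda>x. f x + g x) h = L2_inner M f h + L2_inner M g h"
  by (simp add: L2_inner_def distrib_right L2_mult_integrable)

lemma L2_inner_cmult_left: "L2_inner M (\<lambda>x. c * f x) h = c * L2_inner M f h"
  by (simp add: L2_inner_def mult.assoc)

lemma L2_inner_sum_left:
  "(\<And>a. a \<in> A \<Longrightarrow> L2 M (f a)) \<Longrightarrow> L2 M h \<Longrightarrow>
    L2_inner M (\<lambda>x. \<Sum>a\<in>A. c a * f a x) h = (\<Sum>a\<in>A. c a * L2_inner M (f a) h)"
  by (simp add: L2_inner_def sum_distrib_right L2_mult_integrable L2_cmult mult.assoc)

lemma L2_inner_self_eq_0: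
  assumes "L2 M r" "L2_inner M r r = 0"
  shows "L2_inner M h r = 0"
proof -
  have "AE x in M. (r x)\<^sup>2 = 0"
    using assms unfolding L2_inner_def L2_def
    by (subst integral_nonneg_eq_0_iff_AE[symmetric]) (auto simp: power2_eq_square)
  then have "AE x in M. h x * r x = 0"
    by (rule AE_mp) simp
  then show ?thesis
    unfolding L2_inner_def by (rule integral_eq_zero_AE)
qed

text \<open>Gram--Schmidt: orthogonalise the new function against the span of the others and correct
  the projection along the resulting direction.\<close>
lemma L2_projection_onto_span:
  assumes "finite A" "\<And>a. a \<in> A \<Longrightarrow> L2 M (\<phi> a)" "L2 M t"
  shows "\<exists>c. \<forall>b\<in>A. L2_inner M (\<lambda>x. t x - (\<Sum>a\<in>A. c a * \<phi> a x)) (\<phi> b) = 0"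
  using assms
proof (induction A arbitrary: t rule: finite_induct)
  case empty
  then show ?case by simp
next
  case (insert a A)
  have \<phi>A: "\<And>b. b \<in> A \<Longrightarrow> L2 M (\<phi> b)" and \<phi>a: "L2 M (\<phi> a)"
    using insert.prems by auto
  obtain c0 where c0: "\<And>b. b \<in> A \<Longrightarrow> L2_inner M (\<lambda>x. t x - (\<Sum>a\<in>A. c0 a * \<phi> a x)) (\<phi> b) = 0"
    using insert.IH[OF \<phi>A insert.prems(2)] by blast
  obtain e where e: "\<And>b. b \<in> A \<Longrightarrow> L2_inner M (\<lambda>x. \<phi> a x - (\<Sum>a\<in>A. e a * \<phi> a x)) (\<phi> b) = 0"
    using insert.IH[OF \<phi>A \<phi>a] by blast
  define r where "r = (\<lambda>x. \<phi> a x - (\<Sum>a\<in>A. e a * \<phi> a x))"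
  define g0 where "g0 = (\<lambda>x. t x - (\<Sum>a\<in>A. c0 a * \<phi> a x))"
  define \<mu> where "\<mu> = (if L2_inner M r r = 0 then 0 else L2_inner M g0 r / L2_inner M r r)"
  define g where "g = (\<lambda>x. g0 x - \<mu> * r x)"
  have span: "L2 M (\<lambda>x. \<Sum>a\<in>A. c a * \<phi> a x)" for c
    by (intro L2_sum L2_cmult \<phi>A)
  have r: "L2 M r" and g0: "L2 M g0"
    unfolding r_def g0_def by (intro L2_diff span \<phi>a insert.prems(2))+
  have g: "L2 M g"
    unfolding g_def by (intro L2_diff L2_cmult r g0)
  have g_inner: "L2_inner M g h = L2_inner M g0 h - \<mu> * L2_inner M r h" if "L2 M h" for h
    unfolding g_def using r g0 that by (simp add: L2_inner_diff_left L2_cmult L2_inner_cmult_left)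
  have gA: "L2_inner M g (\<phi> b) = 0" if "b \<in> A" for b
    using c0[OF that] e[OF that] g_inner[OF \<phi>A[OF that]] by (simp add: g0_def r_def)
  have gr: "L2_inner M g r = 0"
  proof (cases "L2_inner M r r = 0")
    case True
    then show ?thesis by (rule L2_inner_self_eq_0[OF r])
  next
    case False
    then show ?thesis
      using g_inner[OF r] by (simp add: \<mu>_def)
  qed
  have "L2_inner M g (\<phi> a) = L2_inner M (\<lambda>x. r x + (\<Sum>b\<in>A. e b * \<phi> b x)) g"
    by (simp add: L2_inner_commute r_def)
  also have "\<dots> = L2_inner M r g + (\<Sum>b\<in>A. e b * L2_inner M (\<phi> b) g)"
    using r span g \<phi>A by (simp add: L2_inner_add_left L2_inner_sum_left)
  also have "\<dots> = 0"
    using gr gA by (simp add: L2_inner_commute)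
  finally have ga: "L2_inner M g (\<phi> a) = 0" .
  define c where "c b = (if b = a then \<mu> else c0 b - \<mu> * e b)" for b
  have "(\<Sum>b\<in>insert a A. c b * \<phi> b x) = \<mu> * \<phi> a x + (\<Sum>b\<in>A. (c0 b - \<mu> * e b) * \<phi> b x)" for x
    using insert.hyps by (auto simp: c_def intro!: sum.cong)
  then have "(\<lambda>x. t x - (\<Sum>b\<in>insert a A. c b * \<phi> b x)) = g"
    by (simp add: g_def g0_def r_def fun_eq_iff algebra_simps sum_subtractf sum_distrib_left)
  then show ?case
    using gA ga by (intro exI[of _ c]) auto
qed

lemma complete_measure_lebesgue_on:
  assumes "S \<in> sets lebesgue"
  shows "complete_measure (lebesgue_on S)"
proof
  fix A B assume "B \<subseteq> A" "A \<in> null_sets (lebesgue_on S)"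
  then have "B \<subseteq> S" "B \<in> null_sets lebesgue"
    using null_sets_restrict_space[OF assms] completion.complete2 by auto
  then show "B \<in> sets (lebesgue_on S)"
    using assms by (simp add: sets_restrict_space_iff null_setsD2)
qed

lemma (in complete_measure) measurable_AE_cong:
  fixes f g :: "'a \<Rightarrow> 'b::topological_space"
  assumes "f \<in> borel_measurable M" "AE x in M. f x = g x"
  shows "g \<in> borel_measurable M"
proof (rule measurableI)
  fix A :: "'b set" assume "A \<in> sets borel"
  then have "f -` A \<inter> space M \<in> sets M"
    using assms(1) by (rule measurable_sets[rotated])
  then show "g -` A \<inter> space M \<in> sets M"
    by (rule in_sets_AE[rotated]) (use assms(2) in \<open>auto elim!: AE_mp\<close>)
qed simp

lemma (in complete_measure) integral_AE_cong:
  fixes f g :: "'a \<Rightarrow> real"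
  assumes "AE x in M. f x = g x"
  shows "integral\<^sup>L M f = integral\<^sup>L M g"
proof (cases "f \<in> borel_measurable M")
  case True
  moreover have "g \<in> borel_measurable M"
    using True assms by (rule measurable_AE_cong)
  ultimately show ?thesis
    using assms by (rule integral_cong_AE)
next
  case False
  have "AE x in M. g x = f x"
    using assms by (auto elim!: AE_mp)
  then have "g \<notin> borel_measurable M"
    using False measurable_AE_cong by blast
  then have "\<not> integrable M f" "\<not> integrable M g"
    using False by auto
  then show ?thesis
    by (simp add: not_integrable_integral_eq)
qed

lemma (in complete_measure) L2_AE_cong:
  assumes "L2 M f" "AE x in M. f x = g x"
  shows "L2 M g"
proof -
  have g: "g \<in> borel_measurable M"
    using assms unfolding L2_def by (blast intro: measurable_AE_cong)
  moreover have "integrable M (\<lambda>x. (g x)\<^sup>2)"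
  proof (rule integrable_cong_AE_imp)
    show "integrable M (\<lambda>x. (f x)\<^sup>2)"
      using assms(1) by (simp add: L2_def)
    show "(\<lambda>x. (g x)\<^sup>2) \<in> borel_measurable M"
      using g by simp
    show "AE x in M. (f x)\<^sup>2 = (g x)\<^sup>2"
      using assms(2) by (rule AE_mp) simp
  qed
  ultimately show ?thesis
    unfolding L2_def ..
qed

definition monomial :: "('n \<Rightarrow> nat) \<Rightarrow> real^'n \<Rightarrow> real" where
  "monomial \<alpha> x = (\<Prod>i\<in>UNIV. (x $ i) ^ \<alpha> i)"

definition multi_indices :: "nat \<Rightarrow> ('n::finite \<Rightarrow> nat) set" where
  "multi_indices n = {\<alpha>. sum \<alpha> UNIV \<le> n}"

lemma finite_multi_indices: "finite (multi_indices n :: ('n::finite \<Rightarrow> nat) set)"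
proof (rule finite_subset)
  show "multi_indices n \<subseteq> PiE (UNIV::'n set) (\<lambda>_. {..n})"
  proof
    fix \<alpha> :: "'n \<Rightarrow> nat"
    assume "\<alpha> \<in> multi_indices n"
    then have "\<alpha> i \<le> n" for i
      using member_le_sum[of i UNIV \<alpha>] by (simp add: multi_indices_def)
    then show "\<alpha> \<in> PiE UNIV (\<lambda>_. {..n})"
      by (simp add: PiE_def extensional_def)
  qed
qed (simp add: finite_PiE)

lemma poly_fun_iff:
  "poly_fun n p \<longleftrightarrow> (\<exists>c. p = (\<lambda>x. \<Sum>\<alpha>\<in>multi_indices n. c \<alpha> * monomial \<alpha> x))"
  by (simp add: poly_fun_def multi_indices_def monomial_def fun_eq_iff)

lemma continuous_on_monomial: "continuous_on UNIV (monomial \<alpha>)"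
  unfolding monomial_def by (intro continuous_intros)

lemma L2_poly_fun: "(\<And>\<alpha>. L2 M (monomial \<alpha>)) \<Longrightarrow> poly_fun n p \<Longrightarrow> L2 M p"
  unfolding poly_fun_iff by (auto intro!: L2_sum L2_cmult)

lemma L2_poly_on:
  assumes "complete_measure M" "\<And>\<alpha>. L2 M (monomial \<alpha>)" "poly_on M n u"
  shows "L2 M u"
proof -
  obtain p where p: "poly_fun n p" "AE x in M. u x = p x"
    using assms(3) unfolding poly_on_def by blast
  have "AE x in M. p x = u x"
    using p(2) by (rule AE_mp) auto
  then show ?thesis
    by (rule complete_measure.L2_AE_cong[OF assms(1) L2_poly_fun[OF assms(2) p(1)]])
qed

lemma l2proj_exists:
  assumes "\<And>\<alpha>. L2 M (monomial \<alpha>)" "L2 M t"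
  shows "\<exists>w. poly_fun n w \<and> l2proj M n t w"
proof -
  obtain c where c: "\<And>\<beta>. \<beta> \<in> multi_indices n \<Longrightarrow>
      L2_inner M (\<lambda>x. t x - (\<Sum>\<alpha>\<in>multi_indices n. c \<alpha> * monomial \<alpha> x)) (monomial \<beta>) = 0"
    using L2_projection_onto_span[where A="multi_indices n" and \<phi>=monomial] finite_multi_indices assms
    by blast
  define w where "w x = (\<Sum>\<alpha>\<in>multi_indices n. c \<alpha> * monomial \<alpha> x)" for x
  have w: "poly_fun n w"
    unfolding poly_fun_iff w_def by blast
  have "integral\<^sup>L M (\<lambda>x. (t x - w x) * p x) = 0" if p: "poly_fun n p" for p
  proof -
    obtain d where d: "p = (\<lambda>x. \<Sum>\<alpha>\<in>multi_indices n. d \<alpha> * monomial \<alpha> x)"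
      using p unfolding poly_fun_iff by blast
    have "L2 M (\<lambda>x. t x - w x)"
      by (intro L2_diff assms(2) L2_poly_fun[OF assms(1) w])
    then have "L2_inner M p (\<lambda>x. t x - w x) = 0"
      using c assms(1) unfolding d
      by (simp add: L2_inner_sum_left L2_inner_commute[of M "monomial _"] w_def)
    then show ?thesis
      by (simp add: L2_inner_def mult.commute)
  qed
  then show ?thesis
    using w unfolding l2proj_def poly_on_def by blast
qed

lemma l2proj_pairing:
  assumes "complete_measure M" "\<And>\<alpha>. L2 M (monomial \<alpha>)"
    and "l2proj M n t w" "L2 M t" "poly_on M n g"
  shows "integral\<^sup>L M (\<lambda>x. g x * t x) = integral\<^sup>L M (\<lambda>x. g x * w x)"
proof -
  have w: "L2 M w" and g: "L2 M g"
    using assms L2_poly_on unfolding l2proj_def by blast+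
  obtain p where p: "poly_fun n p" "AE x in M. g x = p x"
    using assms(5) poly_on_def by blast
  have "integral\<^sup>L M (\<lambda>x. g x * (t x - w x)) = integral\<^sup>L M (\<lambda>x. (t x - w x) * p x)"
    by (rule complete_measure.integral_AE_cong[OF assms(1)]) (use p(2) in \<open>auto elim!: AE_mp\<close>)
  also have "\<dots> = 0"
    using assms(3) p(1) unfolding l2proj_def by blast
  finally show ?thesis
    using L2_mult_integrable[OF g assms(4)] L2_mult_integrable[OF g w] by (simp add: right_diff_distrib)
qed

lemma l2proj_AE_cong:
  assumes "complete_measure M" "l2proj M n t w" "AE x in M. w x = w' x"
  shows "l2proj M n t w'"
  unfolding l2proj_def
proof
  show "poly_on M n w'"
    using assms(2,3) unfolding l2proj_def poly_on_def by (auto elim!: AE_mp)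
  have "integral\<^sup>L M (\<lambda>x. (t x - w' x) * p x) = integral\<^sup>L M (\<lambda>x. (t x - w x) * p x)" for p
    using assms(3) by (intro complete_measure.integral_AE_cong[OF assms(1)]) (auto elim!: AE_mp)
  then show "\<forall>p. poly_fun n p \<longrightarrow> integral\<^sup>L M (\<lambda>x. (t x - w' x) * p x) = 0"
    using assms(2) unfolding l2proj_def by simp
qed

lemma L2_continuous_bounded_support:
  fixes f :: "'a::euclidean_space \<Rightarrow> real"
  assumes "finite_measure M" "f \<in> borel_measurable M" "bounded B" "AE x in M. x \<in> B"
    and "continuous_on UNIV f"
  shows "L2 M f"
proof -
  have "compact (f ` closure B)"
    using assms by (intro compact_continuous_image) (auto intro: continuous_on_subset)
  then obtain C where C: "\<And>y. y \<in> f ` closure B \<Longrightarrow> norm y \<le> C"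
    using compact_imp_bounded bounded_iff by metis
  have "AE x in M. norm ((f x)\<^sup>2) \<le> C\<^sup>2"
    using assms(4)
  proof (rule AE_mp, intro AE_I2 impI)
    fix x assume "x \<in> B"
    then have "\<bar>f x\<bar> \<le> C"
      using C closure_subset by force
    then show "norm ((f x)\<^sup>2) \<le> C\<^sup>2"
      using power_mono[of "\<bar>f x\<bar>" C 2] by simp
  qed
  then show ?thesis
    using assms(2) by (auto simp: L2_def intro!: finite_measure.integrable_const_bound[OF assms(1)])
qed

lemma L2_continuous_lebesgue_on:
  fixes f :: "'a::euclidean_space \<Rightarrow> real"
  assumes "bounded S" "S \<in> sets lebesgue" "continuous_on UNIV f"
  shows "L2 (lebesgue_on S) f"
  by (rule L2_continuous_bounded_support[OF _ _ assms(1) _ assms(3)])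
     (auto intro!: finite_measure_lebesgue_on bounded_set_imp_lmeasurable assms(1,2)
       continuous_imp_measurable_on_sets_lebesgue continuous_on_subset[OF assms(3)])

lemma lipschitz_polytopeD:
  assumes "lipschitz_polytope K"
  shows "open K" "bounded K" "K \<in> sets lebesgue"
  using assms unfolding lipschitz_polytope_def lipschitz_in_def by auto

text \<open>A Lipschitz domain lies locally strictly below the graph of a Lipschitz function, so an
  open set inside its closure cannot reach the graph.\<close>
lemma lipschitz_in_open_subset_closure:
  assumes \<Omega>: "lipschitz_in UNIV \<Omega>" and K: "open K" "K \<subseteq> closure \<Omega>"
  shows "K \<subseteq> \<Omega>"
proof
  fix x assume xK: "x \<in> K"
  show "x \<in> \<Omega>"
  proof (rule ccontr)
    assume x\<Omega>: "x \<notin> \<Omega>"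
    then have "x \<in> closure \<Omega> - \<Omega>"
      using xK K by auto
    then obtain e r g L where e: "norm e = 1" and r: "r > 0" and g: "L-lipschitz_on UNIV g"
      and g_inv: "\<forall>y t. g (y + t *\<^sub>R e) = g y"
      and loc: "\<Omega> \<inter> ball x r = {y \<in> UNIV \<inter> ball x r. y \<bullet> e < g y}"
      using \<Omega> unfolding lipschitz_in_def by blast
    have gx: "g x \<le> x \<bullet> e"
      using loc x\<Omega> r by auto
    obtain \<epsilon> where \<epsilon>: "\<epsilon> > 0" "ball x \<epsilon> \<subseteq> K"
      using K xK open_contains_ball by blast
    define y where "y = x + (min \<epsilon> r / 2) *\<^sub>R e"
    have "dist x y < \<epsilon>" "dist x y < r"
      using e \<epsilon> r by (auto simp: y_def dist_norm)
    then have yr: "y \<in> ball x r" and y\<Omega>: "y \<in> closure \<Omega>"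
      using \<epsilon> K by auto
    have "y \<bullet> e \<le> g y"
    proof (rule ccontr)
      assume "\<not> y \<bullet> e \<le> g y"
      define U where "U = {z. 0 < z \<bullet> e - g z} \<inter> ball x r"
      have "open U"
        using lipschitz_on_continuous_on[OF g] unfolding U_def
        by (intro open_Int open_ball open_Collect_less continuous_intros) auto
      moreover have "y \<in> U"
        using \<open>\<not> y \<bullet> e \<le> g y\<close> yr unfolding U_def by auto
      ultimately obtain z where "z \<in> \<Omega>" "z \<in> U"
        using y\<Omega> open_Int_closure_eq_empty[of U \<Omega>] by blast
      then have "z \<in> \<Omega> \<inter> ball x r" "g z < z \<bullet> e"
        unfolding U_def by auto
      then show False
        unfolding loc by auto
    qed
    moreover have "y \<bullet> e = x \<bullet> e + min \<epsilon> r / 2" "g y = g x"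
      using e g_inv by (auto simp: y_def inner_add_left dot_square_norm)
    ultimately show False
      using gx \<epsilon> r by linarith
  qed
qed

lemma lipschitz_faceD:
  assumes "lipschitz_face F"
  shows "bounded F" "F \<in> sets borel"
proof -
  obtain n c where "lipschitz_in {x. n \<bullet> x = c} F"
    using assms lipschitz_face_def by blast
  then have "bounded F" "openin (top_of_set {x. n \<bullet> x = c}) F"
    by (auto simp: lipschitz_in_def)
  moreover have "closed {x. n \<bullet> x = c}"
    by (rule closed_hyperplane)
  ultimately show "bounded F" "F \<in> sets borel"
    by (auto simp: openin_open)
qed

lemma AE_scale_measure: "(AE x in M. P x) \<Longrightarrow> (AE x in scale_measure r M. P x)"
  by (auto simp: eventually_ae_filter null_sets_def space_scale_measure)

lemma face_measure_eq:
  "face_measure F = completion (scale_measure (ennreal (1/2)) (distr (lebesgue_on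
      {x. \<bar>x \<bullet> face_normal F - face_offset F\<bar> < 1 \<and>
          x - (x \<bullet> face_normal F - face_offset F) *\<^sub>R face_normal F \<in> F})
      lborel (\<lambda>x. x - (x \<bullet> face_normal F - face_offset F) *\<^sub>R face_normal F)))"
  unfolding face_measure_def Let_def ..

lemma complete_measure_face_measure: "complete_measure (face_measure F)"
  unfolding face_measure_eq by (rule completion.complete_measure_axioms)

lemma face_slab_lmeasurable:
  assumes "lipschitz_face F"
  shows "{x. \<bar>x \<bullet> face_normal F - face_offset F\<bar> < 1 \<and>
      x - (x \<bullet> face_normal F - face_offset F) *\<^sub>R face_normal F \<in> F} \<in> lmeasurable"
    (is "?S \<in> lmeasurable")
proof -
  define n where "n = face_normal F"
  define c where "c = face_offset F"
  define P where "P x = x - (x \<bullet> n - c) *\<^sub>R n" for x :: "real^'a"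
  have F: "bounded F" "F \<in> sets borel"
    using lipschitz_faceD[OF assms] by auto
  have P: "continuous_on UNIV P"
    unfolding P_def by (intro continuous_intros)
  have "?S = {x. \<bar>x \<bullet> n - c\<bar> < 1} \<inter> P -` F"
    by (auto simp: n_def c_def P_def)
  moreover have "P -` F \<in> sets borel"
    using measurable_sets[OF borel_measurable_continuous_onI[OF P] F(2)] by simp
  ultimately have "?S \<in> sets lebesgue"
    by (simp add: borel_open open_Collect_less continuous_intros)
  moreover obtain B where B: "\<And>y. y \<in> F \<Longrightarrow> norm y \<le> B"
    using F(1) bounded_iff by metis
  have "norm x \<le> B + norm n" if "x \<in> ?S" for x
  proof -
    have "norm x \<le> norm (P x) + \<bar>x \<bullet> n - c\<bar> * norm n"
      using norm_triangle_ineq[of "P x" "(x \<bullet> n - c) *\<^sub>R n"] by (simp add: P_def)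
    also have "\<dots> \<le> B + 1 * norm n"
      using that B[of "P x"] by (intro add_mono mult_right_mono) (auto simp: n_def c_def P_def)
    finally show ?thesis by simp
  qed
  ultimately show ?thesis
    by (intro bounded_set_imp_lmeasurable) (auto simp: bounded_iff)
qed

lemma face_measure_finite_AE:
  assumes "lipschitz_face F"
  shows "finite_measure (face_measure F)" "AE x in face_measure F. x \<in> F"
proof -
  define n where "n = face_normal F"
  define c where "c = face_offset F"
  define P where "P x = x - (x \<bullet> n - c) *\<^sub>R n" for x :: "real^'a"
  define S where "S = {x. \<bar>x \<bullet> n - c\<bar> < 1 \<and> P x \<in> F}"
  have fm: "face_measure F = completion (scale_measure (ennreal (1/2)) (distr (lebesgue_on S) lborel P))"
    unfolding face_measure_eq S_def P_def n_def c_def ..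
  have "S \<in> lmeasurable"
    unfolding S_def P_def n_def c_def by (rule face_slab_lmeasurable[OF assms])
  then have S: "S \<in> sets lebesgue" and S_finite: "emeasure lebesgue S \<noteq> \<infinity>"
    using fmeasurableD2 by (auto simp: fmeasurable_def)
  have P_meas: "P \<in> lebesgue_on S \<rightarrow>\<^sub>M lborel"
    unfolding P_def
    by (subst measurable_cong_sets[OF refl sets_lborel])
       (rule continuous_imp_measurable_on_sets_lebesgue[OF _ S], intro continuous_intros)
  have "emeasure (face_measure F) (space (face_measure F)) = ennreal (1/2) * emeasure lebesgue S"
    unfolding fm using S
    by (simp add: emeasure_completion emeasure_distr[OF P_meas] space_scale_measure emeasure_restrict_space)
  then show "finite_measure (face_measure F)"
    using S_finite by (intro finite_measureI) (simp add: ennreal_mult_eq_top_iff)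
  have "AE x in distr (lebesgue_on S) lborel P. x \<in> F"
    using lipschitz_faceD(2)[OF assms] S by (subst AE_distr_iff[OF P_meas]) (auto simp: S_def intro!: AE_I2)
  then show "AE x in face_measure F. x \<in> F"
    unfolding fm by (intro AE_completion AE_scale_measure)
qed

lemma L2_continuous_face_measure:
  fixes f :: "real^'n \<Rightarrow> real"
  assumes "lipschitz_face F" "continuous_on UNIV f"
  shows "L2 (face_measure F) f"
proof (rule L2_continuous_bounded_support[OF face_measure_finite_AE(1)[OF assms(1)] _
      lipschitz_faceD(1)[OF assms(1)] face_measure_finite_AE(2)[OF assms(1)] assms(2)])
  show "f \<in> borel_measurable (face_measure F)"
    unfolding face_measure_eq
    by (rule measurable_completion, subst measurable_cong_sets[OF sets_scale_measure refl])
       (simp add: borel_measurable_continuous_onI[OF assms(2)]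
         measurable_cong_sets[OF sets_distr[THEN trans[OF _ sets_lborel]] refl])
qed

lemma invertible_if_coercive:
  fixes B :: "real^'n^'n"
  assumes "c > 0" "\<And>\<xi>. c * (norm \<xi>)\<^sup>2 \<le> (B *v \<xi>) \<bullet> \<xi>"
  shows "invertible B"
proof -
  have "x = 0" if "B *v x = 0" for x
    using assms(1) assms(2)[of x] that by (simp add: mult_le_0_iff)
  then show ?thesis
    unfolding invertible_left_inverse matrix_left_invertible_ker by blast
qed

lemma matrix_inv_mult:
  fixes B :: "real^'n^'n"
  assumes "invertible B"
  shows "matrix_inv B ** B = mat 1" "B ** matrix_inv B = mat 1"
  using someI_ex[OF assms[unfolded invertible_def]] by (auto simp: matrix_inv_def)

lemma symmetric_matrix_inner_commute:
  fixes B :: "real^'n^'n"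
  assumes "transpose B = B"
  shows "(B *v x) \<bullet> y = (B *v y) \<bullet> x"
  by (metis assms dot_lmul_matrix inner_commute transpose_matrix_vector)

lemma symmetric_matrix_inv_inner:
  fixes B :: "real^'n^'n"
  assumes "transpose B = B" "invertible B"
  shows "(matrix_inv B *v s) \<bullet> (B *v g) = s \<bullet> g"
  using symmetric_matrix_inner_commute[OF assms(1), of g "matrix_inv B *v s"]
  by (simp add: inner_commute matrix_vector_mul_assoc matrix_inv_mult(2)[OF assms(2)])

lemma smoothD:
  assumes "smooth \<phi>"
  shows "\<phi> differentiable (at x)" "smooth (partial \<phi> i)"
  using assms by (auto elim: smooth.cases)

lemma smooth_continuous_on: "smooth \<phi> \<Longrightarrow> continuous_on UNIV \<phi>"
  by (intro continuous_at_imp_continuous_on ballI differentiable_imp_continuous_within smoothD(1))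

lemma partial_has_real_derivative_along_axis:
  fixes f :: "real^'n \<Rightarrow> real"
  assumes "\<And>y. f differentiable (at y)"
  shows "((\<lambda>s. f (x + s *\<^sub>R axis i 1)) has_real_derivative partial f i (x + s *\<^sub>R axis i 1)) (at s)"
proof -
  let ?y = "x + s *\<^sub>R axis i 1"
  have f': "(f has_derivative frechet_derivative f (at ?y)) (at ?y)"
    using assms frechet_derivative_works by blast
  have "((f \<circ> (\<lambda>s. x + s *\<^sub>R axis i 1)) has_derivative
      (frechet_derivative f (at ?y) \<circ> (\<lambda>h. h *\<^sub>R axis i 1))) (at s)"
    by (rule diff_chain_at) (auto intro!: derivative_eq_intros f')
  moreover have "frechet_derivative f (at ?y) \<circ> (\<lambda>h. h *\<^sub>R axis i 1) = (*) (partial f i ?y)"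
    using linear_scale[OF has_derivative_linear[OF f']] by (auto simp: partial_def fun_eq_iff)
  ultimately show ?thesis
    by (simp add: has_field_derivative_def o_def)
qed

lemma partial_eq_0_outside_support:
  fixes \<phi> :: "real^'n \<Rightarrow> real"
  assumes "x \<notin> closure {x. \<phi> x \<noteq> 0}"
  shows "partial \<phi> i x = 0"
proof -
  have "((\<lambda>_. 0) has_derivative (\<lambda>_. 0)) (at x)"
    by simp
  then have "(\<phi> has_derivative (\<lambda>_. 0)) (at x)"
  proof (rule has_derivative_transform_within_open[where s="- closure {x. \<phi> x \<noteq> 0}"])
    fix y assume "y \<in> - closure {x. \<phi> x \<noteq> 0}"
    then show "0 = \<phi> y"
      using closure_subset by (metis (mono_tags, lifting) ComplD mem_Collect_eq subsetD)
  qed (use assms in auto)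
  then show ?thesis
    by (simp add: partial_def frechet_derivative_at[symmetric])
qed

lemma test_fun_partial:
  assumes "test_fun K \<phi>"
  shows "test_fun K (partial \<phi> i)"
proof -
  have "{x. partial \<phi> i x \<noteq> 0} \<subseteq> closure {x. \<phi> x \<noteq> 0}"
    using partial_eq_0_outside_support by blast
  then have supp: "closure {x. partial \<phi> i x \<noteq> 0} \<subseteq> closure {x. \<phi> x \<noteq> 0}"
    by (rule closure_minimal) simp
  moreover have "compact (closure {x. \<phi> x \<noteq> 0})"
    using assms unfolding test_fun_def by blast
  ultimately have "compact (closure {x. partial \<phi> i x \<noteq> 0})"
    by (meson bounded_subset closed_closure compact_eq_bounded_closed)
  then show ?thesis
    using assms smoothD(2) supp unfolding test_fun_def by blast
qed

definition second_difference :: "(real^'n \<Rightarrow> real) \<Rightarrow> 'n \<Rightarrow> 'n \<Rightarrow> real^'n \<Rightarrow> real \<Rightarrow> real" where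
  "second_difference f i j x h =
    f (x + h *\<^sub>R axis i 1 + h *\<^sub>R axis j 1) - f (x + h *\<^sub>R axis i 1) - f (x + h *\<^sub>R axis j 1) + f x"

lemma second_difference_commute: "second_difference f i j x h = second_difference f j i x h"
  by (simp add: second_difference_def algebra_simps)

text \<open>Two applications of the mean value theorem, first along axis i and then along axis j.\<close>
lemma second_difference_mean_value:
  fixes f :: "real^'n \<Rightarrow> real"
  assumes f: "\<And>y. f differentiable (at y)" and fi: "\<And>y. partial f i differentiable (at y)"
    and "h > 0"
  shows "\<exists>y. dist y x < 2 * h \<and> second_difference f i j x h / h\<^sup>2 = partial (partial f i) j y"
proof -
  let ?ei = "axis i 1 :: real^'n" and ?ej = "axis j 1 :: real^'n"
  define G where "G s = f (x + h *\<^sub>R ?ej + s *\<^sub>R ?ei) - f (x + s *\<^sub>R ?ei)" for s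
  have "DERIV G s :> partial f i (x + h *\<^sub>R ?ej + s *\<^sub>R ?ei) - partial f i (x + s *\<^sub>R ?ei)" for s
    unfolding G_def by (intro derivative_intros partial_has_real_derivative_along_axis f)
  then have "\<exists>z>0. z < h \<and> G h - G 0 =
      (h - 0) * (\<lambda>s. partial f i (x + h *\<^sub>R ?ej + s *\<^sub>R ?ei) - partial f i (x + s *\<^sub>R ?ei)) z"
    by (intro MVT2 \<open>h > 0\<close>)
  then obtain \<xi> where \<xi>: "0 < \<xi>" "\<xi> < h"
    "G h - G 0 = h * (partial f i (x + h *\<^sub>R ?ej + \<xi> *\<^sub>R ?ei) - partial f i (x + \<xi> *\<^sub>R ?ei))"
    by auto
  define H where "H t = partial f i (x + \<xi> *\<^sub>R ?ei + t *\<^sub>R ?ej)" for t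
  have "DERIV H t :> partial (partial f i) j (x + \<xi> *\<^sub>R ?ei + t *\<^sub>R ?ej)" for t
    unfolding H_def by (rule partial_has_real_derivative_along_axis[OF fi])
  then have "\<exists>z>0. z < h \<and> H h - H 0 = (h - 0) * (\<lambda>t. partial (partial f i) j (x + \<xi> *\<^sub>R ?ei + t *\<^sub>R ?ej)) z"
    by (intro MVT2 \<open>h > 0\<close>)
  then obtain \<eta> where \<eta>: "0 < \<eta>" "\<eta> < h"
    "H h - H 0 = h * partial (partial f i) j (x + \<xi> *\<^sub>R ?ei + \<eta> *\<^sub>R ?ej)"
    by auto
  have "G h - G 0 = second_difference f i j x h"
    by (simp add: G_def second_difference_def algebra_simps)
  moreover have "H h - H 0 = partial f i (x + h *\<^sub>R ?ej + \<xi> *\<^sub>R ?ei) - partial f i (x + \<xi> *\<^sub>R ?ei)"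
    by (simp add: H_def algebra_simps)
  ultimately have "second_difference f i j x h = h * (H h - H 0)"
    using \<xi>(3) by simp
  also have "\<dots> = h\<^sup>2 * partial (partial f i) j (x + \<xi> *\<^sub>R ?ei + \<eta> *\<^sub>R ?ej)"
    using \<eta>(3) by (simp add: power2_eq_square)
  finally have "second_difference f i j x h / h\<^sup>2 = partial (partial f i) j (x + \<xi> *\<^sub>R ?ei + \<eta> *\<^sub>R ?ej)"
    using \<open>h > 0\<close> by simp
  moreover have "dist (x + \<xi> *\<^sub>R ?ei + \<eta> *\<^sub>R ?ej) x \<le> \<xi> + \<eta>"
    using norm_triangle_ineq[of "\<xi> *\<^sub>R ?ei" "\<eta> *\<^sub>R ?ej"] \<xi> \<eta> by (simp add: dist_norm)
  ultimately show ?thesis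
    using \<xi> \<eta> by (intro exI[of _ "x + \<xi> *\<^sub>R ?ei + \<eta> *\<^sub>R ?ej"]) simp
qed

lemma second_difference_tendsto_partial:
  fixes f :: "real^'n \<Rightarrow> real"
  assumes "\<And>y. f differentiable (at y)" "\<And>y. partial f i differentiable (at y)"
    and "isCont (partial (partial f i) j) x"
  shows "((\<lambda>h. second_difference f i j x h / h\<^sup>2) \<longlongrightarrow> partial (partial f i) j x) (at_right 0)"
proof (rule tendstoI)
  fix e :: real assume "e > 0"
  then obtain \<delta> where \<delta>: "\<delta> > 0"
    "\<And>y. dist y x < \<delta> \<Longrightarrow> dist (partial (partial f i) j y) (partial (partial f i) j x) < e"
    using assms(3) unfolding continuous_at_eps_delta by blast
  have "eventually (\<lambda>h. h \<in> {0<..<\<delta>/2}) (at_right (0::real))"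
    using \<delta> by (intro eventually_at_right_real) simp
  then show "eventually (\<lambda>h. dist (second_difference f i j x h / h\<^sup>2) (partial (partial f i) j x) < e)
      (at_right 0)"
  proof (rule eventually_mono)
    fix h :: real assume h: "h \<in> {0<..<\<delta>/2}"
    then obtain y where "dist y x < 2 * h" and y: "second_difference f i j x h / h\<^sup>2 = partial (partial f i) j y"
      using second_difference_mean_value[OF assms(1,2), where h=h and x=x and j=j] by auto
    then have "dist y x < \<delta>"
      using h by simp
    then show "dist (second_difference f i j x h / h\<^sup>2) (partial (partial f i) j x) < e"
      unfolding y by (rule \<delta>(2))
  qed
qed

lemma smooth_partial_commute:
  assumes "smooth \<phi>"
  shows "partial (partial \<phi> i) j x = partial (partial \<phi> j) i x"
proof -
  have d: "\<And>y. \<phi> differentiable (at y)" "\<And>i y. partial \<phi> i differentiable (at y)"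
    using smoothD[OF assms] smoothD[OF smoothD(2)[OF assms]] by blast+
  have c: "isCont (partial (partial \<phi> i) j) x" for i j
    using smooth_continuous_on[OF smoothD(2)[OF smoothD(2)[OF assms]]]
    by (simp add: continuous_on_eq_continuous_at)
  show ?thesis
    using tendsto_unique[OF trivial_limit_at_right_real
        second_difference_tendsto_partial[where f=\<phi> and i=i and j=j and x=x, OF d c]
        second_difference_tendsto_partial[where f=\<phi> and i=j and j=i and x=x, OF d c,
          unfolded second_difference_commute[where i=j and j=i]]]
    by simp
qed

lemma curl_free_weak_grad:
  assumes K: "bounded K" "K \<in> sets lebesgue"
    and grad: "weak_grad K v g" and w: "AE x in lebesgue_on K. w x = g x"
  shows "curl_free K w"
  unfolding curl_free_def
proof (intro allI impI)
  fix \<phi> i j assume \<phi>: "test_fun K \<phi>"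
  have g: "\<And>i. L2 (lebesgue_on K) (\<lambda>x. g x $ i)"
    using grad unfolding weak_grad_def L2v_def by blast
  have \<phi>': "\<And>i. L2 (lebesgue_on K) (partial \<phi> i)"
    using \<phi> smooth_continuous_on smoothD(2) L2_continuous_lebesgue_on[OF K] unfolding test_fun_def by blast
  have by_parts: "integral\<^sup>L (lebesgue_on K) (\<lambda>x. g x $ i * partial \<phi> j x)
      = - integral\<^sup>L (lebesgue_on K) (\<lambda>x. v x * partial (partial \<phi> j) i x)" for i j
    using grad test_fun_partial[OF \<phi>] unfolding weak_grad_def by simp
  have "integral\<^sup>L (lebesgue_on K) (\<lambda>x. w x $ i * partial \<phi> j x - w x $ j * partial \<phi> i x) =
        integral\<^sup>L (lebesgue_on K) (\<lambda>x. g x $ i * partial \<phi> j x - g x $ j * partial \<phi> i x)"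
    by (rule complete_measure.integral_AE_cong[OF complete_measure_lebesgue_on[OF K(2)]])
       (use w in \<open>auto elim!: AE_mp\<close>)
  also have "\<dots> = integral\<^sup>L (lebesgue_on K) (\<lambda>x. g x $ i * partial \<phi> j x)
      - integral\<^sup>L (lebesgue_on K) (\<lambda>x. g x $ j * partial \<phi> i x)"
    using L2_mult_integrable[OF g \<phi>'] by simp
  also have "\<dots> = 0"
    using \<phi> unfolding by_parts test_fun_def by (simp add: smooth_partial_commute)
  finally show "integral\<^sup>L (lebesgue_on K) (\<lambda>x. w x $ i * partial \<phi> j x - w x $ j * partial \<phi> i x) = 0" .
qed

section \<open>Smooth bump functions\<close>

coinductive smooth_real :: "(real \<Rightarrow> real) \<Rightarrow> bool" where
  "(\<forall>s. h differentiable (at s)) \<Longrightarrow> smooth_real (deriv h) \<Longrightarrow> smooth_real h"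

lemma smooth_realD: "smooth_real h \<Longrightarrow> (\<forall>s. h differentiable (at s)) \<and> smooth_real (deriv h)"
  by (auto elim: smooth_real.cases)

lemma smooth_real_affine:
  assumes "smooth_real k"
  shows "smooth_real (\<lambda>s. c * k (\<alpha> * s + \<beta>))"
proof -
  define X where "X h \<longleftrightarrow> (\<exists>k c \<alpha> \<beta>. smooth_real k \<and> h = (\<lambda>s. c * k (\<alpha> * s + \<beta>)))" for h
  have "X (\<lambda>s. c * k (\<alpha> * s + \<beta>))"
    unfolding X_def using assms by blast
  then show ?thesis
  proof (rule smooth_real.coinduct[where X=X])
    fix h assume "X h"
    then obtain k c \<alpha> \<beta> where k: "smooth_real k" and h: "h = (\<lambda>s. c * k (\<alpha> * s + \<beta>))"
      unfolding X_def by blast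
    have k': "DERIV k y :> deriv k y" for y
      using smooth_realD[OF k] DERIV_deriv_iff_real_differentiable by blast
    have h': "DERIV h s :> (c * \<alpha>) * deriv k (\<alpha> * s + \<beta>)" for s
    proof -
      have "DERIV (\<lambda>s. \<alpha> * s + \<beta>) s :> \<alpha>"
        by (auto intro!: derivative_eq_intros)
      from DERIV_cmult[OF DERIV_chain2[OF k' this], of c] show ?thesis
        unfolding h by (simp add: algebra_simps)
    qed
    then have "deriv h = (\<lambda>s. (c * \<alpha>) * deriv k (\<alpha> * s + \<beta>))"
      by (auto intro: DERIV_imp_deriv)
    then have "X (deriv h)"
      using smooth_realD[OF k] unfolding X_def by blast
    moreover have "\<forall>s. h differentiable (at s)"
      using h' real_differentiable_def by blast
    ultimately show "\<exists>h'. h = h' \<and> (\<forall>s. h' differentiable (at s)) \<and> (X (deriv h') \<or> smooth_real (deriv h'))"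
      by blast
  qed
qed

lemma poly_inverse_exp_tendsto_0:
  "((\<lambda>t. poly p (1/t) * exp (-1/t) / t) \<longlongrightarrow> (0::real)) (at_right 0)"
proof -
  let ?r = "p * [:0, 1:]"
  have "((\<lambda>y. \<Sum>i\<le>degree ?r. coeff ?r i * (y ^ i / exp y)) \<longlongrightarrow> (0::real)) at_top"
    by (intro tendsto_null_sum tendsto_mult_right_zero tendsto_power_div_exp_0)
  then have "((\<lambda>y. poly ?r y / exp y) \<longlongrightarrow> (0::real)) at_top"
    by (simp add: poly_altdef sum_divide_distrib)
  then have "((\<lambda>t. poly ?r (inverse t) / exp (inverse t)) \<longlongrightarrow> (0::real)) (at_right 0)"
    by (rule filterlim_compose[OF _ filterlim_inverse_at_top_right])
  moreover have "eventually (\<lambda>t. poly ?r (inverse t) / exp (inverse t) = poly p (1/t) * exp (-1/t) / t)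
      (at_right (0::real))"
    by (rule eventually_mono[OF eventually_at_right_real[OF zero_less_one]])
       (simp add: exp_minus field_simps)
  ultimately show ?thesis
    by (rule Lim_transform_eventually)
qed

definition exp_cutoff :: "real \<Rightarrow> real" where
  "exp_cutoff s = (if s > 0 then exp (-1/s) else 0)"

lemma has_real_derivative_poly_exp_cutoff:
  defines "h p s \<equiv> if s > 0 then poly p (1/s) * exp (-1/s) else (0::real)"
  shows "DERIV (h p) s :> h ([:0, 0, 1:] * (p - pderiv p)) s"
proof (cases "s > 0")
  case True
  have "DERIV (\<lambda>t. poly p (1/t) * exp (-1/t)) s :>
      poly (pderiv p) (1/s) * (- 1 / s\<^sup>2) * exp (-1/s) + poly p (1/s) * (exp (-1/s) * (1 / s\<^sup>2))"
    using True by (auto intro!: derivative_eq_intros DERIV_chain2[OF poly_DERIV] simp: power2_eq_square)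
  moreover have "poly (pderiv p) (1/s) * (- 1 / s\<^sup>2) * exp (-1/s) + poly p (1/s) * (exp (-1/s) * (1 / s\<^sup>2))
      = h ([:0, 0, 1:] * (p - pderiv p)) s"
    using True by (simp add: h_def field_simps power2_eq_square)
  ultimately have "DERIV (\<lambda>t. poly p (1/t) * exp (-1/t)) s :> h ([:0, 0, 1:] * (p - pderiv p)) s"
    by simp
  then show ?thesis
    by (rule has_field_derivative_transform_within_open[where S="{0<..}"]) (use True in \<open>auto simp: h_def\<close>)
next
  case False
  show ?thesis
  proof (cases "s < 0")
    case True
    have "DERIV (\<lambda>_. 0) s :> 0"
      by simp
    then have "DERIV (h p) s :> 0"
      by (rule has_field_derivative_transform_within_open[where S="{..<0}"]) (use True in \<open>auto simp: h_def\<close>)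
    then show ?thesis
      using True by (simp add: h_def)
  next
    case False
    then have s: "s = 0"
      using \<open>\<not> s > 0\<close> by simp
    have "((\<lambda>t. (h p t - h p 0) / t) \<longlongrightarrow> 0) (at_left 0)"
      by (rule Lim_transform_eventually[of "\<lambda>_. 0"])
         (auto simp: h_def intro!: eventually_mono[OF eventually_at_left_real[of "-1"]])
    moreover have "((\<lambda>t. (h p t - h p 0) / t) \<longlongrightarrow> 0) (at_right 0)"
      by (rule Lim_transform_eventually[OF poly_inverse_exp_tendsto_0])
         (auto simp: h_def intro!: eventually_mono[OF eventually_at_right_real[OF zero_less_one]])
    ultimately show ?thesis
      using s by (simp add: DERIV_def filterlim_at_split h_def)
  qed
qed

lemma smooth_real_exp_cutoff: "smooth_real exp_cutoff"
proof -
  define h where "h p s = (if s > 0 then poly p (1/s) * exp (-1/s) else (0::real))" for p s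
  have "exp_cutoff = h 1"
    by (simp add: exp_cutoff_def h_def fun_eq_iff)
  moreover have "smooth_real (h p)" for p
  proof (rule smooth_real.coinduct[where X="\<lambda>f. \<exists>p. f = h p"])
    fix f assume "\<exists>p. f = h p"
    then obtain p where f: "f = h p" by blast
    have f': "DERIV f s :> h ([:0, 0, 1:] * (p - pderiv p)) s" for s
      unfolding f h_def by (rule has_real_derivative_poly_exp_cutoff)
    then have "deriv f = h ([:0, 0, 1:] * (p - pderiv p))"
      by (auto intro: DERIV_imp_deriv)
    then show "\<exists>f'. f = f' \<and> (\<forall>s. f' differentiable (at s)) \<and>
        ((\<exists>p. deriv f' = h p) \<or> smooth_real (deriv f'))"
      using f' real_differentiable_def by blast
  qed blast
  ultimately show ?thesis
    by metis
qed

text \<open>The bool index distinguishes a lower and an upper cutoff in each coordinate.  Partial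
  derivatives of such products are sums of such products, so smoothness is proved for finite sums
  of them.\<close>
definition coord_prod :: "(('n::finite \<times> bool) \<Rightarrow> real \<Rightarrow> real) \<Rightarrow> real^'n \<Rightarrow> real" where
  "coord_prod H x = (\<Prod>c\<in>UNIV. H c (x $ fst c))"

definition coord_prod_deriv :: "(('n::finite \<times> bool) \<Rightarrow> real \<Rightarrow> real) \<Rightarrow> real^'n \<Rightarrow> real^'n \<Rightarrow> real" where
  "coord_prod_deriv H x d =
    (\<Sum>c\<in>UNIV. (deriv (H c) (x $ fst c) * d $ fst c) * (\<Prod>c'\<in>UNIV - {c}. H c' (x $ fst c')))"

definition coord_prod_partials ::
    "'n \<Rightarrow> (('n \<times> bool) \<Rightarrow> real \<Rightarrow> real) list \<Rightarrow> (('n \<times> bool) \<Rightarrow> real \<Rightarrow> real) list" where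
  "coord_prod_partials j Hs =
    concat (map (\<lambda>H. [H((j, True) := deriv (H (j, True))), H((j, False) := deriv (H (j, False)))]) Hs)"

lemma coord_prod_has_derivative:
  fixes H :: "('n::finite \<times> bool) \<Rightarrow> real \<Rightarrow> real"
  assumes "\<And>c s. H c differentiable (at s)"
  shows "(coord_prod H has_derivative coord_prod_deriv H x) (at x)"
proof -
  have "((\<lambda>x. H c (x $ fst c)) has_derivative (\<lambda>d. deriv (H c) (x $ fst c) * d $ fst c)) (at x)" for c
  proof -
    have "(H c has_derivative (*) (deriv (H c) (x $ fst c))) (at (x $ fst c))"
      using assms DERIV_deriv_iff_real_differentiable has_field_derivative_def by blast
    from diff_chain_at[OF bounded_linear_imp_has_derivative[OF bounded_linear_vec_nth] this]
    show ?thesis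
      by (simp add: o_def)
  qed
  then show ?thesis
    unfolding coord_prod_def coord_prod_deriv_def
    by (rule has_derivative_eq_rhs[OF has_derivative_prod]) (simp add: fun_eq_iff)
qed

lemma coord_prod_deriv_axis:
  fixes H :: "('n::finite \<times> bool) \<Rightarrow> real \<Rightarrow> real"
  shows "coord_prod_deriv H x (axis j 1) =
    coord_prod (H((j, True) := deriv (H (j, True)))) x + coord_prod (H((j, False) := deriv (H (j, False)))) x"
proof -
  have upd: "coord_prod (H(c := D)) x = D (x $ fst c) * (\<Prod>c'\<in>UNIV - {c}. H c' (x $ fst c'))" for c D
    unfolding coord_prod_def by (subst prod.remove[of UNIV c]) (auto intro!: prod.cong)
  have "coord_prod_deriv H x (axis j 1) = (\<Sum>c\<in>UNIV. if fst c = j then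
      deriv (H c) (x $ fst c) * (\<Prod>c'\<in>UNIV - {c}. H c' (x $ fst c')) else 0)"
    unfolding coord_prod_deriv_def by (rule sum.cong) (auto simp: axis_def)
  also have "\<dots> = (\<Sum>c\<in>{c. fst c = j}. deriv (H c) (x $ fst c) * (\<Prod>c'\<in>UNIV - {c}. H c' (x $ fst c')))"
    by (simp add: sum.If_cases Int_def)
  also have "{c. fst c = j} = {(j, True), (j, False)}"
    by auto
  finally show ?thesis
    by (simp add: upd)
qed

lemma smooth_sum_coord_prod:
  assumes "\<forall>H\<in>set Hs. \<forall>c. smooth_real (H c)"
  shows "smooth (\<lambda>x::real^'n::finite. \<Sum>H\<leftarrow>Hs. coord_prod H x)"
proof -
  define X where "X \<phi> \<longleftrightarrow> (\<exists>Hs. (\<forall>H\<in>set Hs. \<forall>c. smooth_real (H c)) \<and>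
      \<phi> = (\<lambda>x::real^'n. \<Sum>H\<leftarrow>Hs. coord_prod H x))" for \<phi>
  have "X (\<lambda>x. \<Sum>H\<leftarrow>Hs. coord_prod H x)"
    unfolding X_def using assms by blast
  then show ?thesis
  proof (rule smooth.coinduct[where X=X])
    fix \<phi> assume "X \<phi>"
    then obtain Hs where Hs: "\<forall>H\<in>set Hs. \<forall>c. smooth_real (H c)"
      and \<phi>: "\<phi> = (\<lambda>x. \<Sum>H\<leftarrow>Hs. coord_prod H x)"
      unfolding X_def by blast
    have "((\<lambda>x. \<Sum>H\<leftarrow>Hs. coord_prod H x) has_derivative (\<lambda>d. \<Sum>H\<leftarrow>Hs. coord_prod_deriv H x d)) (at x)"
      for x using Hs
    proof (induction Hs)
      case (Cons H Hs)
      then show ?case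
        using smooth_realD by (auto intro!: has_derivative_add coord_prod_has_derivative)
    qed simp
    then have \<phi>': "(\<phi> has_derivative (\<lambda>d. \<Sum>H\<leftarrow>Hs. coord_prod_deriv H x d)) (at x)" for x
      unfolding \<phi> .
    have "(\<Sum>H\<leftarrow>Hs. coord_prod_deriv H x (axis j 1)) = (\<Sum>H\<leftarrow>coord_prod_partials j Hs. coord_prod H x)"
      for j x by (induction Hs) (auto simp: coord_prod_partials_def coord_prod_deriv_axis)
    then have "partial \<phi> j = (\<lambda>x. \<Sum>H\<leftarrow>coord_prod_partials j Hs. coord_prod H x)" for j
      unfolding partial_def using frechet_derivative_at[OF \<phi>'] by (auto simp: fun_eq_iff)
    moreover have "\<forall>H\<in>set (coord_prod_partials j Hs). \<forall>c. smooth_real (H c)" for j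
      using Hs smooth_realD unfolding coord_prod_partials_def by auto
    ultimately have "X (partial \<phi> j)" for j
      unfolding X_def by blast
    moreover have "\<phi> differentiable (at x)" for x
      using \<phi>' differentiableI by blast
    ultimately show "\<exists>\<phi>'. \<phi> = \<phi>' \<and> (\<forall>x. \<phi>' differentiable (at x)) \<and>
        (\<forall>i. X (partial \<phi>' i) \<or> smooth (partial \<phi>' i))"
      by blast
  qed
qed

definition box_bump :: "real \<Rightarrow> real^'n \<Rightarrow> real^'n \<Rightarrow> real^'n::finite \<Rightarrow> real" where
  "box_bump m a b = coord_prod (\<lambda>(i, lower).
     if lower then (\<lambda>s. exp_cutoff (m * (s - a $ i))) else (\<lambda>s. exp_cutoff (m * (b $ i - s))))"

lemma smooth_box_bump: "smooth (box_bump m a b)"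
proof -
  have "smooth_real (\<lambda>s. exp_cutoff (m * (s - a $ i)))" "smooth_real (\<lambda>s. exp_cutoff (m * (b $ i - s)))" for i
    using smooth_real_affine[OF smooth_real_exp_cutoff, of 1 m "- m * a $ i"]
      smooth_real_affine[OF smooth_real_exp_cutoff, of 1 "- m" "m * b $ i"]
    by (simp_all add: algebra_simps)
  then have "\<forall>H\<in>set [\<lambda>(i, lower). if lower then (\<lambda>s. exp_cutoff (m * (s - a $ i)))
      else (\<lambda>s. exp_cutoff (m * (b $ i - s)))]. \<forall>c. smooth_real (H c)"
    by (auto split: prod.split)
  from smooth_sum_coord_prod[OF this] show ?thesis
    by (simp add: box_bump_def)
qed

lemma box_bump_eq:
  "box_bump m a b x = (\<Prod>i\<in>UNIV. exp_cutoff (m * (x $ i - a $ i)) * exp_cutoff (m * (b $ i - x $ i)))"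
proof -
  have "box_bump m a b x = (\<Prod>(i, lower)\<in>UNIV \<times> UNIV.
      if lower then exp_cutoff (m * (x $ i - a $ i)) else exp_cutoff (m * (b $ i - x $ i)))"
    unfolding box_bump_def coord_prod_def UNIV_Times_UNIV by (intro prod.cong) auto
  also have "\<dots> = (\<Prod>i\<in>UNIV. \<Prod>lower\<in>UNIV.
      if lower then exp_cutoff (m * (x $ i - a $ i)) else exp_cutoff (m * (b $ i - x $ i)))"
    by (rule prod.cartesian_product[symmetric])
  finally show ?thesis
    by (simp add: UNIV_bool mult.commute)
qed

lemma box_bump_nonzero_iff:
  assumes "m > 0"
  shows "box_bump m a b x \<noteq> 0 \<longleftrightarrow> x \<in> box a b"
  using assms by (auto simp: box_bump_eq exp_cutoff_def mem_box_cart zero_less_mult_iff)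

lemma box_bump_bounds: "0 \<le> box_bump m a b x" "box_bump m a b x \<le> 1"
  unfolding box_bump_eq exp_cutoff_def
  by (auto intro!: prod_nonneg prod_le_1 mult_le_one)

lemma exp_cutoff_tendsto_1:
  assumes "t > 0"
  shows "(\<lambda>n. exp_cutoff (real (Suc n) * t)) \<longlonglongrightarrow> 1"
proof -
  have "(\<lambda>n. exp (- inverse t * inverse (real (Suc n)))) \<longlonglongrightarrow> exp (- inverse t * 0)"
    by (intro tendsto_intros LIMSEQ_inverse_real_of_nat)
  moreover have "exp_cutoff (real (Suc n) * t) = exp (- inverse t * inverse (real (Suc n)))" for n
  proof -
    have "0 < real (Suc n) * t"
      using assms by simp
    then show ?thesis
      by (simp add: exp_cutoff_def field_simps)
  qed
  ultimately show ?thesis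
    by simp
qed

lemma box_bump_tendsto_indicator:
  fixes a b x :: "real^'n::finite"
  shows "(\<lambda>n. box_bump (real (Suc n)) a b x) \<longlonglongrightarrow> indicator (box a b) x"
proof (cases "x \<in> box a b")
  case True
  have factor: "(\<lambda>n. exp_cutoff (real (Suc n) * (x $ i - a $ i)) * exp_cutoff (real (Suc n) * (b $ i - x $ i)))
      \<longlonglongrightarrow> 1 * 1" for i
    using True by (intro tendsto_mult exp_cutoff_tendsto_1) (auto simp: mem_box_cart)
  have "(\<lambda>n. box_bump (real (Suc n)) a b x) \<longlonglongrightarrow> (\<Prod>i\<in>(UNIV::'n set). 1 * 1)"
    unfolding box_bump_eq by (intro tendsto_prod factor)
  then show ?thesis
    using True by simp
next
  case False
  then have "box_bump (real (Suc n)) a b x = 0" for n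
    using box_bump_nonzero_iff[of "real (Suc n)" a b x] by simp
  then show ?thesis
    using False by simp
qed

lemma test_fun_box_bump:
  assumes "m > 0" "closure (box a b) \<subseteq> K"
  shows "test_fun K (box_bump m a b)"
proof -
  have "{x. box_bump m a b x \<noteq> 0} = box a b"
    using box_bump_nonzero_iff[OF assms(1)] by auto
  then show ?thesis
    using smooth_box_bump assms(2) by (simp add: test_fun_def compact_closure bounded_box)
qed

section \<open>The fundamental lemma of the calculus of variations\<close>

lemma borel_Int_in_sigma_sets_boxes:
  fixes B0 :: "'a::euclidean_space set"
  assumes "open B0" and B: "B \<in> sets borel"
  shows "B0 \<inter> B \<in> sigma_sets B0 {box a b | a b. box a b \<subseteq> B0}"
proof -
  let ?G = "{box a b | a b. box a b \<subseteq> B0}"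
  define S where "S = {B. B0 \<inter> B \<in> sigma_sets B0 ?G}"
  have sa: "sigma_algebra UNIV S"
    unfolding sigma_algebra_iff2
  proof (intro conjI allI ballI impI)
    show "S \<subseteq> Pow UNIV" by simp
    show "{} \<in> S" unfolding S_def by (simp add: sigma_sets.Empty)
  next
    fix s assume "s \<in> S"
    then have "B0 \<inter> s \<in> sigma_sets B0 ?G" unfolding S_def by simp
    then have "B0 - (B0 \<inter> s) \<in> sigma_sets B0 ?G" by (rule sigma_sets.Compl)
    moreover have "B0 - (B0 \<inter> s) = B0 \<inter> (UNIV - s)" by auto
    ultimately show "UNIV - s \<in> S" unfolding S_def by simp
  next
    fix A :: "nat \<Rightarrow> 'a set" assume "range A \<subseteq> S"
    then have "(\<Union>i. B0 \<inter> A i) \<in> sigma_sets B0 ?G" unfolding S_def by (intro sigma_sets.Union) auto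
    moreover have "(\<Union>i. B0 \<inter> A i) = B0 \<inter> (\<Union>i. A i)" by auto
    ultimately show "(\<Union>i. A i) \<in> S" unfolding S_def by simp
  qed
  have op: "{S. open S} \<subseteq> S"
  proof
    fix U :: "'a set" assume "U \<in> {S. open S}"
    then have "open (B0 \<inter> U)" using assms by auto
    then obtain \<D> where D: "countable \<D>" "\<D> \<subseteq> Pow (B0 \<inter> U)" "\<And>X. X \<in> \<D> \<Longrightarrow> \<exists>a b. X = box a b" "\<Union>\<D> = B0 \<inter> U"
      using open_countable_Union_open_box[OF \<open>open (B0 \<inter> U)\<close>] by blast
    have "\<Union>\<D> \<in> sigma_sets B0 ?G"
    proof (rule sigma_sets_UNION[OF D(1)])
      fix X assume X: "X \<in> \<D>"
      then have "X \<in> ?G" using D(2) D(3)[OF X] by blast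
      then show "X \<in> sigma_sets B0 ?G" by (rule sigma_sets.Basic)
    qed
    then show "U \<in> S" using D(4) unfolding S_def by simp
  qed
  have "sigma_sets UNIV {S. open S} \<subseteq> S" by (rule sigma_algebra.sigma_sets_subset[OF sa op])
  moreover have "sets borel = sigma_sets UNIV {S :: 'a set. open S}" unfolding borel_def by simp
  ultimately show ?thesis using B unfolding S_def by auto
qed

lemma set_integral_eq_0_sigma_sets_boxes:
  fixes \<delta> :: "'a::euclidean_space \<Rightarrow> real"
  assumes B0: "B0 = box a0 b0" and int: "integrable (lebesgue_on B0) \<delta>"
    and base: "\<And>a b. box a b \<subseteq> B0 \<Longrightarrow> (LINT x:box a b|lebesgue_on B0. \<delta> x) = 0"
    and A: "A \<in> sigma_sets B0 {box a b | a b. box a b \<subseteq> B0}"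
  shows "(LINT x:A|lebesgue_on B0. \<delta> x) = 0"
proof -
  let ?G = "{box a b | a b. box a b \<subseteq> B0}"
  let ?M = "lebesgue_on B0"
  have B0l: "B0 \<in> sets lebesgue" unfolding B0 by simp
  have spM: "space ?M = B0" by (simp add: space_restrict_space)
  have GM: "?G \<subseteq> sets ?M" using B0l by (auto simp: sets_restrict_space_iff)
  have sub: "sigma_sets B0 ?G \<subseteq> sets ?M"
    using sets.sigma_sets_subset[OF GM] spM by simp
  have si: "\<And>X. X \<in> sets ?M \<Longrightarrow> set_integrable ?M X \<delta>"
    unfolding set_integrable_def by (rule integrable_mult_indicator[OF _ int])
  have ist: "Int_stable ?G"
  proof (rule Int_stableI)
    fix X Y assume "X \<in> ?G" "Y \<in> ?G"
    then obtain a b c d where XY: "X = box a b" "Y = box c d" "box a b \<subseteq> B0" by blast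
    then obtain a' b' where "X \<inter> Y = box a' b'" using box_Int_box by blast
    moreover have "X \<inter> Y \<subseteq> B0" using XY by auto
    ultimately show "X \<inter> Y \<in> ?G" by blast
  qed
  have B0G: "B0 \<in> ?G" unfolding B0 by blast
  show ?thesis
  proof (rule sigma_sets_induct_disjoint[OF ist _ A, where P="\<lambda>A. (LINT x:A|?M. \<delta> x) = 0"])
    show "?G \<subseteq> Pow B0" by auto
  next
    fix X assume "X \<in> ?G"
    then obtain a b where "X = box a b" "box a b \<subseteq> B0" by blast
    then show "(LINT x:X|?M. \<delta> x) = 0" using base by simp
  next
    show "(LINT x:{}|?M. \<delta> x) = 0" by (simp add: set_lebesgue_integral_def)
  next
    fix A assume compl: "A \<in> sigma_sets B0 ?G" "(LINT x:A|?M. \<delta> x) = 0"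
    have AM: "A \<in> sets ?M" using compl(1) sub by blast
    then have AB: "A \<subseteq> B0" using sets.sets_into_space spM by blast
    have "(LINT x:A \<union> (B0 - A)|?M. \<delta> x) = (LINT x:A|?M. \<delta> x) + (LINT x:(B0 - A)|?M. \<delta> x)"
    proof (rule set_integral_Un)
      have B0M: "B0 \<in> sets ?M" using sets.top[of ?M] unfolding spM .
      show "set_integrable ?M A \<delta>" by (rule si[OF AM])
      show "set_integrable ?M (B0 - A) \<delta>" by (rule si[OF sets.Diff[OF B0M AM]])
    qed auto
    moreover have "A \<union> (B0 - A) = B0" using AB by auto
    moreover have "(LINT x:B0|?M. \<delta> x) = 0" using base[of a0 b0] B0 by simp
    ultimately show "(LINT x:(B0 - A)|?M. \<delta> x) = 0" using compl(2) by simp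
  next
    fix A :: "nat \<Rightarrow> 'a set"
    assume union: "disjoint_family A" "range A \<subseteq> sigma_sets B0 ?G" "\<And>i. (LINT x:A i|?M. \<delta> x) = 0"
    have AM: "\<And>i. A i \<in> sets ?M" using union(2) sub by blast
    have "(LINT x:(\<Union>i. A i)|?M. \<delta> x) = (\<Sum>i. (LINT x:(A i)|?M. \<delta> x))"
    proof (rule lebesgue_integral_countable_add[OF AM])
      show "\<And>i j. i \<noteq> j \<Longrightarrow> A i \<inter> A j = {}" using union(1) by (simp add: disjoint_family_on_def)
      show "set_integrable ?M (\<Union>i. A i) \<delta>" using AM by (intro si) auto
    qed
    then show "(LINT x:(\<Union>i. A i)|?M. \<delta> x) = 0" using union(3) by simp
  qed
qed

lemma AE_eq_0_if_box_integrals_eq_0: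
  fixes \<delta> :: "'a::euclidean_space \<Rightarrow> real"
  assumes B0: "B0 = box a0 b0" and int: "integrable (lebesgue_on B0) \<delta>"
    and base: "\<And>a b. box a b \<subseteq> B0 \<Longrightarrow> (LINT x:box a b|lebesgue_on B0. \<delta> x) = 0"
  shows "AE x in lebesgue_on B0. \<delta> x = 0"
proof -
  let ?M = "lebesgue_on B0"
  have B0_sets: "B0 \<in> sets lebesgue"
    unfolding B0 by simp
  interpret finite_measure ?M
    unfolding B0 by (rule finite_measure_lebesgue_on[OF lmeasurable_box])
  show ?thesis
  proof (rule density_zero[OF int])
    fix A assume A: "A \<in> sets ?M"
    then have "A \<subseteq> B0" "A \<in> sets lebesgue"
      using B0_sets by (auto simp: sets_restrict_space_iff)
    then obtain S N N' where SN: "A = S \<union> N" "N \<subseteq> N'" "N' \<in> null_sets lborel" "S \<in> sets borel"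
      by (auto elim: sets_completionE)
    have S: "S \<subseteq> B0" "S \<in> sets ?M"
      using SN \<open>A \<subseteq> B0\<close> B0_sets by (auto simp: sets_restrict_space_iff)
    have "A - S \<in> null_sets lebesgue"
    proof (rule null_sets_subset[OF null_sets_completionI[OF SN(3)]])
      show "A - S \<in> sets lebesgue"
        using \<open>A \<in> sets lebesgue\<close> SN(4) by auto
      show "A - S \<subseteq> N'"
        using SN(1,2) by blast
    qed
    moreover have "(A - S) \<union> (S - A) = A - S"
      using SN(1) by blast
    ultimately have "(A - S) \<union> (S - A) \<in> null_sets ?M"
      using \<open>A \<subseteq> B0\<close> B0_sets by (auto simp: null_sets_restrict_space)
    then have "(LINT x:A|?M. \<delta> x) = (LINT x:B0 \<inter> S|?M. \<delta> x)"
      using S by (simp add: set_integral_null_delta[OF int A] Int_absorb1)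
    also have "\<dots> = 0"
    proof (rule set_integral_eq_0_sigma_sets_boxes[OF B0 int base])
      show "B0 \<inter> S \<in> sigma_sets B0 {box a b |a b. box a b \<subseteq> B0}"
        using SN(4) by (intro borel_Int_in_sigma_sets_boxes) (simp_all add: B0 open_box)
    qed
    finally show "(LINT x:A|?M. \<delta> x) = 0" .
  qed
qed

lemma countable_rational_vectors: "countable {a::'a::euclidean_space. \<forall>i\<in>Basis. a \<bullet> i \<in> \<rat>}"
proof (rule countable_subset)
  show "{a::'a. \<forall>i\<in>Basis. a \<bullet> i \<in> \<rat>} \<subseteq> (\<lambda>f. \<Sum>i\<in>Basis. f i *\<^sub>R i) ` (Basis \<rightarrow>\<^sub>E \<rat>)"
  proof
    fix a :: 'a assume a: "a \<in> {a. \<forall>i\<in>Basis. a \<bullet> i \<in> \<rat>}"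
    have "a = (\<lambda>f. \<Sum>i\<in>Basis. f i *\<^sub>R i) (restrict (\<lambda>i. a \<bullet> i) Basis)"
      by (simp add: euclidean_representation)
    moreover have "restrict (\<lambda>i. a \<bullet> i) Basis \<in> Basis \<rightarrow>\<^sub>E \<rat>" using a by auto
    ultimately show "a \<in> (\<lambda>f. \<Sum>i\<in>Basis. f i *\<^sub>R i) ` (Basis \<rightarrow>\<^sub>E \<rat>)" by blast
  qed
  show "countable ((\<lambda>f. \<Sum>i\<in>Basis. f i *\<^sub>R i) ` (Basis \<rightarrow>\<^sub>E (\<rat>::real set)))"
    by (intro countable_image countable_PiE finite_Basis countable_rat)
qed

lemma AE_eq_0_on_inner_box:
  fixes \<delta> :: "'a::euclidean_space \<Rightarrow> real"
  assumes K: "K \<in> sets lebesgue" and int: "integrable (lebesgue_on K) \<delta>"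
    and base: "\<And>a b. closure (box a b) \<subseteq> K \<Longrightarrow> integral\<^sup>L (lebesgue_on K) (\<lambda>x. indicator (box a b) x * \<delta> x) = 0"
    and cl: "closure (box a0 b0) \<subseteq> K"
  shows "AE x in lebesgue. x \<in> box a0 b0 \<longrightarrow> \<delta> x = 0"
proof -
  define B0 where "B0 = box a0 b0"
  have B0K: "B0 \<subseteq> K"
    using cl closure_subset unfolding B0_def by blast
  have B0_sets: "B0 \<in> sets lebesgue"
    unfolding B0_def by simp
  have on_K: "(\<lambda>x. indicator B0 x *\<^sub>R (indicator K x *\<^sub>R f x)) = (\<lambda>x. indicator B0 x *\<^sub>R f x)"
    for f :: "'a \<Rightarrow> real"
    using B0K by (auto simp: fun_eq_iff indicator_def)
  have "integrable lebesgue (\<lambda>x. indicator K x *\<^sub>R \<delta> x)"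
    using int integrable_restrict_space[of K lebesgue \<delta>] K by simp
  then have "integrable lebesgue (\<lambda>x. indicator B0 x *\<^sub>R \<delta> x)"
    using integrable_mult_indicator[OF B0_sets] on_K by metis
  then have B0_int: "integrable (lebesgue_on B0) \<delta>"
    using integrable_restrict_space[of B0 lebesgue \<delta>] B0_sets by simp
  have "(LINT x:box a b|lebesgue_on B0. \<delta> x) = 0" if ab: "box a b \<subseteq> B0" for a b
  proof -
    have "(LINT x:box a b|lebesgue_on B0. \<delta> x) =
        integral\<^sup>L lebesgue (\<lambda>x. indicator B0 x *\<^sub>R (indicator (box a b) x *\<^sub>R \<delta> x))"
      unfolding set_lebesgue_integral_def using B0_sets by (simp add: integral_restrict_space)
    also have "\<dots> = integral\<^sup>L lebesgue (\<lambda>x. indicator K x *\<^sub>R (indicator (box a b) x *\<^sub>R \<delta> x))"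
      using ab B0K by (intro arg_cong[where f="integral\<^sup>L lebesgue"]) (auto simp: fun_eq_iff indicator_def)
    also have "\<dots> = integral\<^sup>L (lebesgue_on K) (\<lambda>x. indicator (box a b) x * \<delta> x)"
      using K by (simp add: integral_restrict_space)
    also have "\<dots> = 0"
      using closure_mono[OF ab] cl unfolding B0_def by (intro base) blast
    finally show ?thesis .
  qed
  then have "AE x in lebesgue_on B0. \<delta> x = 0"
    by (rule AE_eq_0_if_box_integrals_eq_0[OF B0_def B0_int])
  then show ?thesis
    using B0_sets by (simp add: AE_restrict_space_iff B0_def)
qed

lemma AE_eq_0_if_inner_box_integrals_eq_0:
  fixes \<delta> :: "'a::euclidean_space \<Rightarrow> real"
  assumes K: "open K" and int: "integrable (lebesgue_on K) \<delta>"
    and base: "\<And>a b. closure (box a b) \<subseteq> K \<Longrightarrow> integral\<^sup>L (lebesgue_on K) (\<lambda>x. indicator (box a b) x * \<delta> x) = 0"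
  shows "AE x in lebesgue_on K. \<delta> x = 0"
proof -
  have Kl: "K \<in> sets lebesgue"
    using K by simp
  note AEB = AE_eq_0_on_inner_box[OF Kl int base]
  define Q where "Q = {a::'a. \<forall>i\<in>Basis. a \<bullet> i \<in> \<rat>}"
  define \<B> where "\<B> = {p \<in> Q \<times> Q. closure (box (fst p) (snd p)) \<subseteq> K}"
  have cB: "countable \<B>"
    by (rule countable_subset[of _ "Q \<times> Q"]) (auto simp: \<B>_def Q_def intro: countable_rational_vectors)
  have "AE x in lebesgue. \<forall>p\<in>\<B>. x \<in> box (fst p) (snd p) \<longrightarrow> \<delta> x = 0"
    using cB AEB unfolding \<B>_def by (subst AE_ball_countable) auto
  then have "AE x in lebesgue. x \<in> K \<longrightarrow> \<delta> x = 0"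
  proof (rule AE_mp, intro AE_I2 impI)
    fix x assume H: "\<forall>p\<in>\<B>. x \<in> box (fst p) (snd p) \<longrightarrow> \<delta> x = 0" and xK: "x \<in> K"
    obtain e where e: "e > 0" "ball x e \<subseteq> K" using K xK open_contains_ball by blast
    obtain a b where ab: "\<forall>i\<in>Basis. a \<bullet> i \<in> \<rat> \<and> b \<bullet> i \<in> \<rat>" "x \<in> box a b" "box a b \<subseteq> ball x (e/2)"
      using rational_boxes[of "e/2" x] e by auto
    have "closure (box a b) \<subseteq> closure (ball x (e/2))" using ab(3) by (rule closure_mono)
    also have "\<dots> = cball x (e/2)" using e by simp
    also have "\<dots> \<subseteq> ball x e" using e by (auto simp: subset_eq)
    finally have "closure (box a b) \<subseteq> K" using e by blast
    then have "(a, b) \<in> \<B>" using ab unfolding \<B>_def Q_def by auto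
    then show "\<delta> x = 0" using H[rule_format, of "(a, b)"] ab(2) by simp
  qed
  then show ?thesis using AE_restrict_space_iff[of K lebesgue] Kl by simp
qed

lemma borel_measurable_lebesgue_on:
  fixes g :: "'a::euclidean_space \<Rightarrow> real"
  shows "g \<in> borel_measurable borel \<Longrightarrow> g \<in> borel_measurable (lebesgue_on K)"
  by (rule measurable_restrict_space1, rule measurable_completion)
     (simp add: measurable_cong_sets[OF sets_lborel refl])

lemma integral_box_eq_0_if_test_integrals_eq_0:
  fixes \<delta> :: "real^'n::finite \<Rightarrow> real"
  assumes int: "integrable (lebesgue_on K) \<delta>"
    and tf: "\<And>\<phi>. test_fun K \<phi> \<Longrightarrow> integral\<^sup>L (lebesgue_on K) (\<lambda>x. \<delta> x * \<phi> x) = 0"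
    and cl: "closure (box a b) \<subseteq> K"
  shows "integral\<^sup>L (lebesgue_on K) (\<lambda>x. indicator (box a b) x * \<delta> x) = 0"
proof -
  let ?M = "lebesgue_on K"
  let ?s = "\<lambda>n x. \<delta> x * box_bump (real (Suc n)) a b x"
  have dm: "\<delta> \<in> borel_measurable ?M" using int by simp
  have "(\<lambda>n. integral\<^sup>L ?M (?s n)) \<longlonglongrightarrow> integral\<^sup>L ?M (\<lambda>x. \<delta> x * indicator (box a b) x)"
  proof (rule integral_dominated_convergence[where w="\<lambda>x. \<bar>\<delta> x\<bar>"])
    have "(indicator (box a b) :: real^'n \<Rightarrow> real) \<in> borel_measurable ?M"
      by (rule borel_measurable_lebesgue_on) simp
    then show "(\<lambda>x. \<delta> x * indicator (box a b) x) \<in> borel_measurable ?M" using dm by simp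
    fix n
    have "box_bump (real (Suc n)) a b \<in> borel_measurable ?M"
      by (rule borel_measurable_lebesgue_on, rule borel_measurable_continuous_onI, rule smooth_continuous_on[OF smooth_box_bump])
    then show "?s n \<in> borel_measurable ?M" using dm by simp
    show "AE x in ?M. norm (?s n x) \<le> \<bar>\<delta> x\<bar>"
    proof (rule AE_I2)
      fix x
      have "\<bar>box_bump (real (Suc n)) a b x\<bar> \<le> 1" using box_bump_bounds[of "real (Suc n)" a b x] by simp
      then show "norm (?s n x) \<le> \<bar>\<delta> x\<bar>"
        by (simp add: abs_mult mult_left_le)
    qed
  next
    show "integrable ?M (\<lambda>x. \<bar>\<delta> x\<bar>)" using int by simp
    show "AE x in ?M. (\<lambda>n. ?s n x) \<longlonglongrightarrow> \<delta> x * indicator (box a b) x"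
      by (rule AE_I2) (intro tendsto_mult tendsto_const box_bump_tendsto_indicator)
  qed
  moreover have "integral\<^sup>L ?M (?s n) = 0" for n
    by (rule tf[OF test_fun_box_bump]) (use cl in auto)
  ultimately have "(\<lambda>n. 0) \<longlonglongrightarrow> integral\<^sup>L ?M (\<lambda>x. \<delta> x * indicator (box a b) x)" by simp
  then have "integral\<^sup>L ?M (\<lambda>x. \<delta> x * indicator (box a b) x) = 0" using LIMSEQ_unique tendsto_const by blast
  then show ?thesis by (simp add: mult.commute)
qed

lemma AE_eq_0_if_test_integrals_eq_0:
  fixes \<delta> :: "real^'n::finite \<Rightarrow> real"
  assumes K: "open K" and int: "integrable (lebesgue_on K) \<delta>"
    and tf: "\<And>\<phi>. test_fun K \<phi> \<Longrightarrow> integral\<^sup>L (lebesgue_on K) (\<lambda>x. \<delta> x * \<phi> x) = 0"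
  shows "AE x in lebesgue_on K. \<delta> x = 0"
  by (rule AE_eq_0_if_inner_box_integrals_eq_0[OF K int integral_box_eq_0_if_test_integrals_eq_0[OF int tf]])

lemma weak_grad_unique:
  assumes Kf: "open K" "bounded K" "K \<in> sets lebesgue"
    and g1: "weak_grad K v g1" and g2: "weak_grad K v g2"
  shows "AE x in lebesgue_on K. g1 x = g2 x"
proof -
  have Li: "L2 (lebesgue_on K) (\<lambda>x. g x $ i)" if "weak_grad K v g" for g i
    using that unfolding weak_grad_def L2v_def by blast
  have one: "L2 (lebesgue_on K) (\<lambda>x. 1)" by (rule L2_continuous_lebesgue_on[OF Kf(2,3)]) simp
  have comp: "AE x in lebesgue_on K. g1 x $ i - g2 x $ i = 0" for i
  proof (rule AE_eq_0_if_test_integrals_eq_0[OF Kf(1)])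
    have "L2 (lebesgue_on K) (\<lambda>x. g1 x $ i - g2 x $ i)" by (intro L2_diff Li g1 g2)
    from L2_mult_integrable[OF this one] show "integrable (lebesgue_on K) (\<lambda>x. g1 x $ i - g2 x $ i)" by simp
    fix \<phi> assume tf: "test_fun K \<phi>"
    have Lp: "L2 (lebesgue_on K) \<phi>"
      using tf unfolding test_fun_def by (intro L2_continuous_lebesgue_on[OF Kf(2,3) smooth_continuous_on]) auto
    have "integral\<^sup>L (lebesgue_on K) (\<lambda>x. (g1 x $ i - g2 x $ i) * \<phi> x) =
        integral\<^sup>L (lebesgue_on K) (\<lambda>x. g1 x $ i * \<phi> x) - integral\<^sup>L (lebesgue_on K) (\<lambda>x. g2 x $ i * \<phi> x)"
      using L2_mult_integrable[OF Li[OF g1] Lp] L2_mult_integrable[OF Li[OF g2] Lp]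
      by (simp add: left_diff_distrib)
    also have "\<dots> = 0"
    proof -
      have w1: "integral\<^sup>L (lebesgue_on K) (\<lambda>x. v x * partial \<phi> i x) = - integral\<^sup>L (lebesgue_on K) (\<lambda>x. g1 x $ i * \<phi> x)"
        using g1 tf unfolding weak_grad_def by blast
      have w2: "integral\<^sup>L (lebesgue_on K) (\<lambda>x. v x * partial \<phi> i x) = - integral\<^sup>L (lebesgue_on K) (\<lambda>x. g2 x $ i * \<phi> x)"
        using g2 tf unfolding weak_grad_def by blast
      show ?thesis using w1 w2 by linarith
    qed
    finally show "integral\<^sup>L (lebesgue_on K) (\<lambda>x. (g1 x $ i - g2 x $ i) * \<phi> x) = 0" .
  qed
  have "AE x in lebesgue_on K. \<forall>i. g1 x $ i - g2 x $ i = 0"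
    using comp by (subst AE_all_countable) auto
  then show ?thesis by (rule AE_mp) (auto simp: vec_eq_iff)
qed

lemma L2_monomial_lebesgue_on: "bounded K \<Longrightarrow> K \<in> sets lebesgue \<Longrightarrow> L2 (lebesgue_on K) (monomial \<alpha>)"
  by (rule L2_continuous_lebesgue_on[OF _ _ continuous_on_monomial])

lemma L2_monomial_face_measure: "lipschitz_face F \<Longrightarrow> L2 (face_measure F) (monomial \<alpha>)"
  by (rule L2_continuous_face_measure[OF _ continuous_on_monomial])

lemma normal_trace_green_projected:
  assumes K: "bounded K" "K \<in> sets lebesgue" and faces: "\<And>F. F \<in> facesK \<F> K \<Longrightarrow> lipschitz_face F"
    and \<tau>: "normal_trace \<F> K \<tau> g" "weak_div K \<tau> q"
    and q: "poly_on (lebesgue_on K) n q" and g: "\<And>F. F \<in> facesK \<F> K \<Longrightarrow> poly_on (face_measure F) m g"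
    and \<phi>: "weak_grad K \<phi> g\<phi>" "is_trace \<F> K \<phi> t"
    and \<phi>_cell: "l2proj (lebesgue_on K) n \<phi> \<phi>K"
    and \<phi>_faces: "\<And>F. F \<in> facesK \<F> K \<Longrightarrow> l2proj (face_measure F) m t \<phi>B"
  shows "integral\<^sup>L (lebesgue_on K) (\<lambda>x. \<tau> x \<bullet> g\<phi> x) =
    (\<Sum>F\<in>facesK \<F> K. integral\<^sup>L (face_measure F) (\<lambda>x. g x * \<phi>B x)) - integral\<^sup>L (lebesgue_on K) (\<lambda>x. q x * \<phi>K x)"
proof -
  have "integral\<^sup>L (lebesgue_on K) (\<lambda>x. \<tau> x \<bullet> g\<phi> x) + integral\<^sup>L (lebesgue_on K) (\<lambda>x. q x * \<phi> x)
      = (\<Sum>F\<in>facesK \<F> K. integral\<^sup>L (face_measure F) (\<lambda>x. g x * t x))"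
    using \<tau> \<phi> unfolding normal_trace_def by blast
  moreover have "integral\<^sup>L (lebesgue_on K) (\<lambda>x. q x * \<phi> x) = integral\<^sup>L (lebesgue_on K) (\<lambda>x. q x * \<phi>K x)"
    using \<phi>(1) unfolding weak_grad_def
    by (intro l2proj_pairing[OF complete_measure_lebesgue_on[OF K(2)] L2_monomial_lebesgue_on[OF K] \<phi>_cell _ q])
       blast
  moreover have "integral\<^sup>L (face_measure F) (\<lambda>x. g x * t x) = integral\<^sup>L (face_measure F) (\<lambda>x. g x * \<phi>B x)"
    if "F \<in> facesK \<F> K" for F
    using \<phi>(2) that unfolding is_trace_def
    by (intro l2proj_pairing[OF complete_measure_face_measure L2_monomial_face_measure[OF faces]
          \<phi>_faces _ g]) auto
  ultimately show ?thesis
    by simp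
qed

lemma admissible_mesh_cellD:
  assumes mesh: "admissible_mesh \<Omega> \<K> \<F> nF" and K: "K \<in> \<K>"
  shows "open K" "bounded K" "K \<in> sets lebesgue" "K \<subseteq> \<Omega>"
proof -
  have "lipschitz_polytope K" "lipschitz_polytope \<Omega>" "closure K \<subseteq> closure \<Omega>"
    using mesh K unfolding admissible_mesh_def by auto
  then show "open K" "bounded K" "K \<in> sets lebesgue" "K \<subseteq> \<Omega>"
    using lipschitz_polytopeD lipschitz_in_open_subset_closure closure_subset
    unfolding lipschitz_polytope_def by (metis order_trans)+
qed

lemma admissible_mesh_faceD:
  assumes mesh: "admissible_mesh \<Omega> \<K> \<F> nF" and F: "F \<in> facesK \<F> K"
  shows "lipschitz_face F"
  using assms unfolding admissible_mesh_def facesK_def by auto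

text \<open>Distinct faces are disjoint and each face measure lives on its face, so the face-wise
  projections glue to a single function.\<close>
lemma l2proj_faces_exists:
  assumes mesh: "admissible_mesh \<Omega> \<K> \<F> nF" and t: "\<And>F. F \<in> facesK \<F> K \<Longrightarrow> L2 (face_measure F) t"
  shows "\<exists>w. \<forall>F\<in>facesK \<F> K. l2proj (face_measure F) n t w"
proof -
  have "\<exists>p. l2proj (face_measure F) n t p" if "F \<in> facesK \<F> K" for F
    using l2proj_exists[OF L2_monomial_face_measure[OF admissible_mesh_faceD[OF mesh that]] t[OF that]]
    by blast
  then obtain p where p: "\<And>F. F \<in> facesK \<F> K \<Longrightarrow> l2proj (face_measure F) n t (p F)"
    by metis
  define w where "w x = (\<Sum>F\<in>facesK \<F> K. indicator F x * p F x)" for x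
  have "AE x in face_measure F. p F x = w x" if F: "F \<in> facesK \<F> K" for F
    using face_measure_finite_AE(2)[OF admissible_mesh_faceD[OF mesh F]]
  proof (rule AE_mp, intro AE_I2 impI)
    fix x assume "x \<in> F"
    have "finite (facesK \<F> K)" "\<forall>F'\<in>facesK \<F> K. F' \<noteq> F \<longrightarrow> F' \<inter> F = {}"
      using mesh F unfolding admissible_mesh_def facesK_def by auto
    then have "w x = (\<Sum>F'\<in>facesK \<F> K. if F' = F then p F x else 0)"
      unfolding w_def using \<open>x \<in> F\<close> by (intro sum.cong) (auto simp: indicator_def)
    then show "p F x = w x"
      using F \<open>finite (facesK \<F> K)\<close> by simp
  qed
  then have "l2proj (face_measure F) n t w" if "F \<in> facesK \<F> K" for F
    using that by (intro l2proj_AE_cong[OF complete_measure_face_measure p])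
  then show ?thesis
    by blast
qed

lemma Lambda_trace_projection:
  assumes mesh: "admissible_mesh \<Omega> \<K> \<F> nF" and v: "V0 \<K> \<F> nF b l k v"
    and t: "\<forall>K\<in>\<K>. is_trace \<F> K (v K) (t K)"
  shows "\<exists>vB. Lambda \<K> \<F> nF b l k vB \<and> (\<forall>K\<in>\<K>. \<forall>F\<in>facesK \<F> K. l2proj (face_measure F) (k - 1) (t K) (vB K))"
proof -
  have "\<forall>K\<in>\<K>. \<exists>w. \<forall>F\<in>facesK \<F> K. l2proj (face_measure F) (k - 1) (t K) w"
    using t l2proj_faces_exists[OF mesh] unfolding is_trace_def by blast
  then obtain vB where vB: "\<forall>K\<in>\<K>. \<forall>F\<in>facesK \<F> K. l2proj (face_measure F) (k - 1) (t K) (vB K)"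
    by metis
  then have "Lambda \<K> \<F> nF b l k vB"
    using v t unfolding Lambda_def l2proj_def by blast
  then show ?thesis
    using vB by blast
qed

lemma admissible_data_AE_invertible:
  assumes mesh: "admissible_mesh \<Omega> \<K> \<F> nF" and data: "admissible_data \<Omega> b bflat bsharp f"
    and K: "K \<in> \<K>"
  shows "AE x in lebesgue_on K. invertible (b x)"
proof -
  have "lipschitz_polytope \<Omega>"
    using mesh by (simp add: admissible_mesh_def)
  then have \<Omega>: "\<Omega> \<in> sets lebesgue"
    by (rule lipschitz_polytopeD(3))
  have "AE x in lebesgue_on \<Omega>. \<forall>\<xi>. bflat * (norm \<xi>)\<^sup>2 \<le> (b x *v \<xi>) \<bullet> \<xi>" and "bflat > 0"
    using data unfolding admissible_data_def by (auto elim!: AE_mp)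
  then have "AE x in lebesgue. x \<in> \<Omega> \<longrightarrow> (\<forall>\<xi>. bflat * (norm \<xi>)\<^sup>2 \<le> (b x *v \<xi>) \<bullet> \<xi>)"
    using \<Omega> by (simp add: AE_restrict_space_iff)
  then have "AE x in lebesgue. x \<in> \<Omega> \<longrightarrow> invertible (b x)"
    by (rule AE_mp, intro AE_I2 impI) (use invertible_if_coercive[OF \<open>bflat > 0\<close>] in blast)
  then show ?thesis
    using admissible_mesh_cellD(3,4)[OF mesh K] by (auto simp: AE_restrict_space_iff elim!: AE_mp)
qed

lemma bchoice3:
  assumes "\<forall>x\<in>S. \<exists>a b c. P x a b c"
  obtains A B C where "\<forall>x\<in>S. P x (A x) (B x) (C x)"
proof -
  obtain A where "\<forall>x\<in>S. \<exists>b c. P x (A x) b c"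
    using assms by (rule bchoice[THEN exE])
  then obtain B where "\<forall>x\<in>S. \<exists>c. P x (A x) (B x) c"
    by (rule bchoice[THEN exE])
  then obtain C where "\<forall>x\<in>S. P x (A x) (B x) (C x)"
    by (rule bchoice[THEN exE])
  then show thesis
    by (rule that)
qed

lemma dHMD:
  assumes "dHM \<K> \<F> nF b f l k \<sigma> u uB"
  shows "\<forall>K\<in>\<K>. Sigma_loc \<F> b l k K (\<sigma> K)"
    and "\<And>\<tau> q\<tau> g\<tau>. \<forall>K\<in>\<K>. Sigma_loc \<F> b l k K (\<tau> K) \<and> weak_div K (\<tau> K) (q\<tau> K) \<and>
        normal_trace \<F> K (\<tau> K) (g\<tau> K) \<Longrightarrow>
      (\<Sum>K\<in>\<K>. integral\<^sup>L (lebesgue_on K) (\<lambda>x. (matrix_inv (b x) *v \<sigma> K x) \<bullet> \<tau> K x))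
      + (\<Sum>K\<in>\<K>. integral\<^sup>L (lebesgue_on K) (\<lambda>x. u K x * q\<tau> K x)) - bpair \<K> \<F> g\<tau> uB = 0"
    and "\<And>v q\<sigma>. \<forall>K\<in>\<K>. poly_on (lebesgue_on K) (l - 1) (v K) \<and> weak_div K (\<sigma> K) (q\<sigma> K) \<Longrightarrow>
      - (\<Sum>K\<in>\<K>. integral\<^sup>L (lebesgue_on K) (\<lambda>x. q\<sigma> K x * v K x))
      = (\<Sum>K\<in>\<K>. integral\<^sup>L (lebesgue_on K) (\<lambda>x. f x * v K x))"
    and "\<And>vB g\<sigma>. Lambda \<K> \<F> nF b l k vB \<Longrightarrow> \<forall>K\<in>\<K>. normal_trace \<F> K (\<sigma> K) (g\<sigma> K) \<Longrightarrow>
      bpair \<K> \<F> g\<sigma> vB = 0"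
  using assms unfolding dHM_def by blast+

lemma dHM_flux_eq_source:
  assumes mesh: "admissible_mesh \<Omega> \<K> \<F> nF" and sol: "dHM \<K> \<F> nF b f l k \<sigma> u uB"
    and v: "V0 \<K> \<F> nF b l k v" and gv: "\<forall>K\<in>\<K>. weak_grad K (v K) (gv K)"
    and w: "\<forall>K\<in>\<K>. l2proj (lebesgue_on K) (l - 1) (v K) (w K)"
  shows "(\<Sum>K\<in>\<K>. integral\<^sup>L (lebesgue_on K) (\<lambda>x. \<sigma> K x \<bullet> gv K x))
    = (\<Sum>K\<in>\<K>. integral\<^sup>L (lebesgue_on K) (\<lambda>x. f x * w K x))"
proof -
  obtain q g where \<sigma>: "\<forall>K\<in>\<K>. weak_div K (\<sigma> K) (q K) \<and> poly_on (lebesgue_on K) (l - 1) (q K) \<and>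
      normal_trace \<F> K (\<sigma> K) (g K) \<and> (\<forall>F\<in>facesK \<F> K. poly_on (face_measure F) (k - 1) (g K))"
    using dHMD(1)[OF sol] unfolding Sigma_loc_def by metis
  obtain t where t: "\<forall>K\<in>\<K>. is_trace \<F> K (v K) (t K)"
    using v unfolding V0_def jumps_vanish_def by blast
  obtain vB where vB: "Lambda \<K> \<F> nF b l k vB"
    "\<forall>K\<in>\<K>. \<forall>F\<in>facesK \<F> K. l2proj (face_measure F) (k - 1) (t K) (vB K)"
    using Lambda_trace_projection[OF mesh v t] by blast
  have "integral\<^sup>L (lebesgue_on K) (\<lambda>x. \<sigma> K x \<bullet> gv K x) =
      (\<Sum>F\<in>facesK \<F> K. integral\<^sup>L (face_measure F) (\<lambda>x. g K x * vB K x))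
      - integral\<^sup>L (lebesgue_on K) (\<lambda>x. q K x * w K x)" if K: "K \<in> \<K>" for K
    by (rule normal_trace_green_projected[OF admissible_mesh_cellD(2,3)[OF mesh K]
          admissible_mesh_faceD[OF mesh]]) (use \<sigma> gv t w vB(2) K in auto)
  then have "(\<Sum>K\<in>\<K>. integral\<^sup>L (lebesgue_on K) (\<lambda>x. \<sigma> K x \<bullet> gv K x))
      = bpair \<K> \<F> g vB - (\<Sum>K\<in>\<K>. integral\<^sup>L (lebesgue_on K) (\<lambda>x. q K x * w K x))"
    by (simp add: bpair_def sum_subtractf)
  moreover have "bpair \<K> \<F> g vB = 0"
    by (rule dHMD(4)[OF sol vB(1)]) (use \<sigma> in blast)
  moreover have "- (\<Sum>K\<in>\<K>. integral\<^sup>L (lebesgue_on K) (\<lambda>x. q K x * w K x))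
      = (\<Sum>K\<in>\<K>. integral\<^sup>L (lebesgue_on K) (\<lambda>x. f x * w K x))"
    by (rule dHMD(3)[OF sol]) (use \<sigma> w in \<open>auto simp: l2proj_def\<close>)
  ultimately show ?thesis
    by simp
qed


lemma flux_in_Sigma_loc:
  assumes K: "bounded K" "K \<in> sets lebesgue" and inv: "AE x in lebesgue_on K. invertible (b x)"
    and gv: "weak_grad K v gv"
    and q: "weak_div K (\<lambda>x. b x *v gv x) q" "poly_on (lebesgue_on K) (l - 1) q"
    and g: "normal_trace \<F> K (\<lambda>x. b x *v gv x) g" "\<forall>F\<in>facesK \<F> K. poly_on (face_measure F) (k - 1) g"
  shows "Sigma_loc \<F> b l k K (\<lambda>x. b x *v gv x)"
proof -
  have "AE x in lebesgue_on K. matrix_inv (b x) *v (b x *v gv x) = gv x"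
    using inv by (rule AE_mp) (auto simp: matrix_vector_mul_assoc matrix_inv_mult(1))
  then have "curl_free K (\<lambda>x. matrix_inv (b x) *v (b x *v gv x))"
    by (rule curl_free_weak_grad[OF K gv])
  then show ?thesis
    using q g unfolding Sigma_loc_def by blast
qed

text \<open>The three integrals of the first equation of the hybridized mixed problem, tested with
  the flux b \<nabla>v on one cell.\<close>
lemma cell_flux_energy_identity:
  assumes mesh: "admissible_mesh \<Omega> \<K> \<F> nF" and data: "admissible_data \<Omega> b bflat bsharp f"
    and K: "K \<in> \<K>"
    and ut: "weak_grad K ut gu" "is_trace \<F> K ut tu" "l2proj (lebesgue_on K) (l - 1) ut uK"
      "\<forall>F\<in>facesK \<F> K. l2proj (face_measure F) (k - 1) tu uBK"
    and v: "weak_grad K v gv" "weak_grad K v gv'"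
      "weak_div K (\<lambda>x. b x *v gv' x) q" "poly_on (lebesgue_on K) (l - 1) q"
      "normal_trace \<F> K (\<lambda>x. b x *v gv' x) g" "\<forall>F\<in>facesK \<F> K. poly_on (face_measure F) (k - 1) g"
  shows "integral\<^sup>L (lebesgue_on K) (\<lambda>x. \<sigma> x \<bullet> gv x)
      - integral\<^sup>L (lebesgue_on K) (\<lambda>x. (b x *v gu x) \<bullet> gv x)
    = integral\<^sup>L (lebesgue_on K) (\<lambda>x. (matrix_inv (b x) *v \<sigma> x) \<bullet> (b x *v gv' x))
      + integral\<^sup>L (lebesgue_on K) (\<lambda>x. uK x * q x)
      - (\<Sum>F\<in>facesK \<F> K. integral\<^sup>L (face_measure F) (\<lambda>x. g x * uBK x))"
proof -
  note K' = admissible_mesh_cellD[OF mesh K]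
  interpret complete_measure "lebesgue_on K"
    by (rule complete_measure_lebesgue_on[OF K'(3)])
  have sym: "transpose (b x) = b x" if "x \<in> space (lebesgue_on K)" for x
    using data that K'(4) unfolding admissible_data_def by auto
  have same_grad: "AE x in lebesgue_on K. gv x = gv' x"
    by (rule weak_grad_unique[OF K'(1-3) v(1,2)])
  have "integral\<^sup>L (lebesgue_on K) (\<lambda>x. (matrix_inv (b x) *v \<sigma> x) \<bullet> (b x *v gv' x))
      = integral\<^sup>L (lebesgue_on K) (\<lambda>x. \<sigma> x \<bullet> gv x)"
    using AE_space admissible_data_AE_invertible[OF mesh data K] same_grad
    by (intro integral_AE_cong) (auto simp: symmetric_matrix_inv_inner sym elim!: AE_mp)
  moreover have "integral\<^sup>L (lebesgue_on K) (\<lambda>x. (b x *v gv' x) \<bullet> gu x)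
      = integral\<^sup>L (lebesgue_on K) (\<lambda>x. (b x *v gu x) \<bullet> gv x)"
    using AE_space same_grad
    by (intro integral_AE_cong) (auto simp: sym symmetric_matrix_inner_commute elim!: AE_mp)
  moreover have "integral\<^sup>L (lebesgue_on K) (\<lambda>x. (b x *v gv' x) \<bullet> gu x)
      = (\<Sum>F\<in>facesK \<F> K. integral\<^sup>L (face_measure F) (\<lambda>x. g x * uBK x))
        - integral\<^sup>L (lebesgue_on K) (\<lambda>x. q x * uK x)"
    by (rule normal_trace_green_projected[OF K'(2,3) admissible_mesh_faceD[OF mesh] v(5,3,4) _ ut(1-3)])
       (use v(6) ut(4) in auto)
  ultimately show ?thesis
    by (simp add: mult.commute)
qed

lemma dHM_flux_eq_energy:
  assumes mesh: "admissible_mesh \<Omega> \<K> \<F> nF" and data: "admissible_data \<Omega> b bflat bsharp f"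
    and sol: "dHM \<K> \<F> nF b f l k \<sigma> u uB"
    and ut_cell: "\<forall>K\<in>\<K>. l2proj (lebesgue_on K) (l - 1) (ut K) (u K)"
    and ut_bdry: "\<forall>K\<in>\<K>. is_trace \<F> K (ut K) (tu K) \<and>
      (\<forall>F\<in>facesK \<F> K. l2proj (face_measure F) (k - 1) (tu K) (uB K))"
    and v: "\<forall>K\<in>\<K>. V_loc \<F> b l k K (v K)"
    and grads: "\<forall>K\<in>\<K>. weak_grad K (ut K) (gu K) \<and> weak_grad K (v K) (gv K)"
  shows "(\<Sum>K\<in>\<K>. integral\<^sup>L (lebesgue_on K) (\<lambda>x. \<sigma> K x \<bullet> gv K x))
    = (\<Sum>K\<in>\<K>. integral\<^sup>L (lebesgue_on K) (\<lambda>x. (b x *v gu K x) \<bullet> gv K x))"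
proof -
  have "\<forall>K\<in>\<K>. \<exists>gv' q g. weak_grad K (v K) gv' \<and>
      (weak_div K (\<lambda>x. b x *v gv' x) q \<and> poly_on (lebesgue_on K) (l - 1) q) \<and>
      (normal_trace \<F> K (\<lambda>x. b x *v gv' x) g \<and> (\<forall>F\<in>facesK \<F> K. poly_on (face_measure F) (k - 1) g))"
    using v unfolding V_loc_def by blast
  then obtain gv' q g where V: "\<forall>K\<in>\<K>. weak_grad K (v K) (gv' K) \<and>
      (weak_div K (\<lambda>x. b x *v gv' K x) (q K) \<and> poly_on (lebesgue_on K) (l - 1) (q K)) \<and>
      (normal_trace \<F> K (\<lambda>x. b x *v gv' K x) (g K) \<and> (\<forall>F\<in>facesK \<F> K. poly_on (face_measure F) (k - 1) (g K)))"
    by (rule bchoice3)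
  define \<tau> where "\<tau> K x = b x *v gv' K x" for K x
  have "\<forall>K\<in>\<K>. Sigma_loc \<F> b l k K (\<tau> K) \<and> weak_div K (\<tau> K) (q K) \<and> normal_trace \<F> K (\<tau> K) (g K)"
    using V admissible_data_AE_invertible[OF mesh data] admissible_mesh_cellD[OF mesh]
    unfolding \<tau>_def by (blast intro: flux_in_Sigma_loc)
  then have "(\<Sum>K\<in>\<K>. integral\<^sup>L (lebesgue_on K) (\<lambda>x. (matrix_inv (b x) *v \<sigma> K x) \<bullet> \<tau> K x))
      + (\<Sum>K\<in>\<K>. integral\<^sup>L (lebesgue_on K) (\<lambda>x. u K x * q K x)) - bpair \<K> \<F> g uB = 0"
    by (rule dHMD(2)[OF sol])
  moreover have "(\<Sum>K\<in>\<K>. integral\<^sup>L (lebesgue_on K) (\<lambda>x. \<sigma> K x \<bullet> gv K x)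
      - integral\<^sup>L (lebesgue_on K) (\<lambda>x. (b x *v gu K x) \<bullet> gv K x))
      = (\<Sum>K\<in>\<K>. integral\<^sup>L (lebesgue_on K) (\<lambda>x. (matrix_inv (b x) *v \<sigma> K x) \<bullet> \<tau> K x)
      + integral\<^sup>L (lebesgue_on K) (\<lambda>x. u K x * q K x)
      - (\<Sum>F\<in>facesK \<F> K. integral\<^sup>L (face_measure F) (\<lambda>x. g K x * uB K x)))"
    unfolding \<tau>_def using V grads ut_cell ut_bdry
    by (intro sum.cong refl cell_flux_energy_identity[OF mesh data]) auto
  ultimately show ?thesis
    by (simp add: bpair_def sum_subtractf sum.distrib)
qed

theorem mainTheorem6:
  fixes \<Omega> :: "(real^'n) set" and \<K> \<F> :: "(real^'n) set set"
    and nF :: "(real^'n) set \<Rightarrow> real^'n"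
    and b :: "real^'n \<Rightarrow> real^'n^'n" and bflat bsharp :: real and f :: "real^'n \<Rightarrow> real"
    and l k :: nat
    and \<sigma> :: "(real^'n) set \<Rightarrow> real^'n \<Rightarrow> real^'n"
    and u uB ut :: "(real^'n) set \<Rightarrow> real^'n \<Rightarrow> real"
  assumes mesh: "admissible_mesh \<Omega> \<K> \<F> nF"
    and data: "admissible_data \<Omega> b bflat bsharp f"
    and l: "l \<ge> 1" and k: "k \<ge> 1"
    and sol: "dHM \<K> \<F> nF b f l k \<sigma> u uB"
    and ut_V0: "V0 \<K> \<F> nF b l k ut"
    and ut_cell: "\<forall>K\<in>\<K>. l2proj (lebesgue_on K) (l - 1) (ut K) (u K)"
    and ut_bdry: "\<exists>t. \<forall>K\<in>\<K>. is_trace \<F> K (ut K) (t K) \<and>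
                     (\<forall>F\<in>facesK \<F> K. l2proj (face_measure F) (k - 1) (t K) (uB K))"
  shows "dP \<K> \<F> nF b f l k ut"
  unfolding dP_def
proof (intro conjI allI impI)
  show "V0 \<K> \<F> nF b l k ut"
    by (rule ut_V0)
  fix v gu gv w
  assume v: "V0 \<K> \<F> nF b l k v"
    and H: "\<forall>K\<in>\<K>. weak_grad K (ut K) (gu K) \<and> weak_grad K (v K) (gv K) \<and>
      l2proj (lebesgue_on K) (l - 1) (v K) (w K)"
  obtain tu where tu: "\<forall>K\<in>\<K>. is_trace \<F> K (ut K) (tu K) \<and>
      (\<forall>F\<in>facesK \<F> K. l2proj (face_measure F) (k - 1) (tu K) (uB K))"
    using ut_bdry by blast
  have "\<forall>K\<in>\<K>. V_loc \<F> b l k K (v K)"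
    using v unfolding V0_def by blast
  then have "(\<Sum>K\<in>\<K>. integral\<^sup>L (lebesgue_on K) (\<lambda>x. \<sigma> K x \<bullet> gv K x))
      = (\<Sum>K\<in>\<K>. integral\<^sup>L (lebesgue_on K) (\<lambda>x. (b x *v gu K x) \<bullet> gv K x))"
    by (rule dHM_flux_eq_energy[OF mesh data sol ut_cell tu]) (use H in blast)
  moreover have "(\<Sum>K\<in>\<K>. integral\<^sup>L (lebesgue_on K) (\<lambda>x. \<sigma> K x \<bullet> gv K x))
      = (\<Sum>K\<in>\<K>. integral\<^sup>L (lebesgue_on K) (\<lambda>x. f x * w K x))"
    by (rule dHM_flux_eq_source[OF mesh sol v]) (use H in blast)+
  ultimately show "(\<Sum>K\<in>\<K>. integral\<^sup>L (lebesgue_on K) (\<lambda>x. (b x *v gu K x) \<bullet> gv K x))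
      = (\<Sum>K\<in>\<K>. integral\<^sup>L (lebesgue_on K) (\<lambda>x. f x * w K x))"
    by simp
qed

end
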